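(* For every $n\ge1$ there exist an MSSP instance with two agents and a profile $\pi\in\Pi_{n+1}$ such that $\mathbb{E}_\pi[\textit{MHit}]<\inf_{\pi'\in\Pi_n}\mathbb{E}_{\pi'}[\textit{MHit}]$. Furthermore, for every MSSP instance with $k$ agents and every $\varepsilon>0$ there exists a finite-memory profile $\pi$ that is $\varepsilon$-optimal, i.e. $\mathbb{E}_\pi[\textit{MHit}]\le\inf_{\pi'\in\Pi}\mathbb{E}_{\pi'}[\textit{MHit}]+\varepsilon$.
   Context: An MDP is a triple $M=(S,\textit{Act},P)$ with finite sets $S$, $\textit{Act}$ and $P:S\times\textit{Act}\times S\to[0,1]$ such that for each $s$ the set $\textit{En}(s)$ of enabled actions (those $a$ with $\sum_t P(s,a,t)=1$) is nonempty. An MSSP instance consists of an MDP $M$, a number $k\ge1$ of agents, and for each agent $i$ an initial state $\iota_i\in S$ and target set $T_i\subseteq S$ with $\iota_i\notin T_i\neq\emptyset$. In the autonomous setting each agent $i$ uses its own strategy $\sigma_i$ in $M$ which depends only on agent $i$'s own history; the strategy is given by a set $\mathit{Mem}_i$ of memory states, a (randomized) initial memory, a randomized rule choosing an enabled action from the current state and memory state, and a randomized memory-update rule; agents evolve independently, agent $i$ starting in $\iota_i$. A tuple $\pi=(\sigma_1,\dots,\sigma_k)$ is an (autonomous) profile; it is finite-memory if all $\mathit{Mem}_i$ are finite. $\Pi$ is the class of all autonomous profiles and $\Pi_n$ the class of profiles with $|\mathit{Mem}_i|\le n$ for all $i$. $\textit{MHit}$ is the first time step at which some agent $i$ is in a state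 of $T_i$ ($\infty$ if never), and $\mathbb{E}_\pi[\textit{MHit}]$ is its expectation under $\pi$. *)

theory Defs
  imports "HOL-Probability.Probability_Mass_Function"
begin

text \<open>An MDP is given by a finite state set S, a finite action set Act and
  P :: state => action => state => real (only values on S x Act x S matter).\<close>

definition enabled :: "'s set \<Rightarrow> 'a set \<Rightarrow> ('s \<Rightarrow> 'a \<Rightarrow> 's \<Rightarrow> real) \<Rightarrow> 's \<Rightarrow> 'a set" where
  "enabled S Act P s = {a \<in> Act. (\<Sum>t\<in>S. P s a t) = 1}"

definition is_mdp :: "'s set \<Rightarrow> 'a set \<Rightarrow> ('s \<Rightarrow> 'a \<Rightarrow> 's \<Rightarrow> real) \<Rightarrow> bool" where
  "is_mdp S Act P \<longleftrightarrow> finite S \<and> finite Act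
     \<and> (\<forall>s\<in>S. \<forall>a\<in>Act. \<forall>t\<in>S. 0 \<le> P s a t \<and> P s a t \<le> 1)
     \<and> (\<forall>s\<in>S. enabled S Act P s \<noteq> {})"

definition is_mssp :: "'s set \<Rightarrow> 'a set \<Rightarrow> ('s \<Rightarrow> 'a \<Rightarrow> 's \<Rightarrow> real) \<Rightarrow> nat
     \<Rightarrow> (nat \<Rightarrow> 's) \<Rightarrow> (nat \<Rightarrow> 's set) \<Rightarrow> bool" where
  "is_mssp S Act P k iota T \<longleftrightarrow> is_mdp S Act P \<and> k \<ge> 1
     \<and> (\<forall>i<k. iota i \<in> S \<and> T i \<subseteq> S \<and> iota i \<notin> T i \<and> T i \<noteq> {})"

definition trans_pmf :: "'s set \<Rightarrow> ('s \<Rightarrow> 'a \<Rightarrow> 's \<Rightarrow> real) \<Rightarrow> 's \<Rightarrow> 'a \<Rightarrow> 's pmf" where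
  "trans_pmf S P s a = embed_pmf (\<lambda>t. if t \<in> S then P s a t else 0)"

record ('s, 'a, 'm) strat =
  mem :: "'m set"
  init :: "'m pmf"
  act :: "'s \<Rightarrow> 'm \<Rightarrow> 'a pmf"
  upd :: "'m \<Rightarrow> 's \<Rightarrow> 'm pmf"      \<comment> \<open>randomized memory update on the new state\<close>

definition valid_strat :: "'s set \<Rightarrow> 'a set \<Rightarrow> ('s \<Rightarrow> 'a \<Rightarrow> 's \<Rightarrow> real)
     \<Rightarrow> ('s, 'a, 'm) strat \<Rightarrow> bool" where
  "valid_strat S Act P \<sigma> \<longleftrightarrow> set_pmf (init \<sigma>) \<subseteq> mem \<sigma>
     \<and> (\<forall>s\<in>S. \<forall>m\<in>mem \<sigma>. set_pmf (act \<sigma> s m) \<subseteq> enabled S Act P s)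
     \<and> (\<forall>m\<in>mem \<sigma>. \<forall>s\<in>S. set_pmf (upd \<sigma> m s) \<subseteq> mem \<sigma>)"

definition valid_profile :: "'s set \<Rightarrow> 'a set \<Rightarrow> ('s \<Rightarrow> 'a \<Rightarrow> 's \<Rightarrow> real) \<Rightarrow> nat
     \<Rightarrow> (nat \<Rightarrow> ('s, 'a, 'm) strat) \<Rightarrow> bool" where
  "valid_profile S Act P k \<pi> \<longleftrightarrow> (\<forall>i<k. valid_strat S Act P (\<pi> i))"

text \<open>Profiles in Pi_n: every memory set has at most n elements.\<close>
definition mem_bounded :: "nat \<Rightarrow> nat \<Rightarrow> (nat \<Rightarrow> ('s, 'a, 'm) strat) \<Rightarrow> bool" where
  "mem_bounded n k \<pi> \<longleftrightarrow> (\<forall>i<k. finite (mem (\<pi> i)) \<and> card (mem (\<pi> i)) \<le> n)"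

definition finite_memory :: "nat \<Rightarrow> (nat \<Rightarrow> ('s, 'a, 'm) strat) \<Rightarrow> bool" where
  "finite_memory k \<pi> \<longleftrightarrow> (\<forall>i<k. finite (mem (\<pi> i)))"

text \<open>Distribution of the agent's (state, memory) at time t, where None means
  that the agent has already visited its target at some time \<le> t.\<close>
fun agent_dist :: "'s set \<Rightarrow> ('s \<Rightarrow> 'a \<Rightarrow> 's \<Rightarrow> real) \<Rightarrow> 's \<Rightarrow> 's set
     \<Rightarrow> ('s, 'a, 'm) strat \<Rightarrow> nat \<Rightarrow> ('s \<times> 'm) option pmf" where
  "agent_dist S P \<iota> Tg \<sigma> 0 =
     map_pmf (\<lambda>m. if \<iota> \<in> Tg then None else Some (\<iota>, m)) (init \<sigma>)"
| "agent_dist S P \<iota> Tg \<sigma> (Suc t) =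
     bind_pmf (agent_dist S P \<iota> Tg \<sigma> t) (\<lambda>x. case x of
        None \<Rightarrow> return_pmf None
      | Some (s, m) \<Rightarrow>
          bind_pmf (act \<sigma> s m) (\<lambda>a.
          bind_pmf (trans_pmf S P s a) (\<lambda>s'.
          map_pmf (\<lambda>m'. if s' \<in> Tg then None else Some (s', m')) (upd \<sigma> m s'))))"

definition survive :: "'s set \<Rightarrow> ('s \<Rightarrow> 'a \<Rightarrow> 's \<Rightarrow> real) \<Rightarrow> 's \<Rightarrow> 's set
     \<Rightarrow> ('s, 'a, 'm) strat \<Rightarrow> nat \<Rightarrow> real" where
  "survive S P \<iota> Tg \<sigma> t = 1 - pmf (agent_dist S P \<iota> Tg \<sigma> t) None"

text \<open>Agents evolve independently, so Pr[MHit > t] is the product of the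
  individual survival probabilities, and for the N u {\<infinity>}-valued MHit,
  E[MHit] = sum over t \<ge> 0 of Pr[MHit > t] (value in ennreal, may be \<infinity>).\<close>
definition prob_MHit_gt :: "'s set \<Rightarrow> ('s \<Rightarrow> 'a \<Rightarrow> 's \<Rightarrow> real) \<Rightarrow> nat
     \<Rightarrow> (nat \<Rightarrow> 's) \<Rightarrow> (nat \<Rightarrow> 's set) \<Rightarrow> (nat \<Rightarrow> ('s, 'a, 'm) strat) \<Rightarrow> nat \<Rightarrow> real" where
  "prob_MHit_gt S P k iota T \<pi> t = (\<Prod>i<k. survive S P (iota i) (T i) (\<pi> i) t)"

definition E_MHit :: "'s set \<Rightarrow> ('s \<Rightarrow> 'a \<Rightarrow> 's \<Rightarrow> real) \<Rightarrow> nat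
     \<Rightarrow> (nat \<Rightarrow> 's) \<Rightarrow> (nat \<Rightarrow> 's set) \<Rightarrow> (nat \<Rightarrow> ('s, 'a, 'm) strat) \<Rightarrow> ennreal" where
  "E_MHit S P k iota T \<pi> = (\<Sum>t. ennreal (prob_MHit_gt S P k iota T \<pi> t))"

end

theory Submission
  imports Defs
begin

text \<open>In the timer instance below the expected hitting time is the survival
  probability of a single gambling agent summed up to a deadline \<open>n + 2\<close>; the optimum gambles
  exactly at time \<open>n\<close>, which needs a counter with \<open>n + 1\<close> values. With at most \<open>n\<close> memory
  states, the memory dynamics while waiting is a substochastic kernel on \<open>n\<close> points, and a
  pigeonhole argument on its powers shows that the probability of gambling at time \<open>n\<close> is at
  most \<open>n\<close> times the probability of having gambled earlier; each early gamble has a fixed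
  regret, so the optimum is missed by a fixed amount.

  A profile of finite cost has an agent that hits its target almost surely,
  and such an agent is only ever alive in the region from which the target is reachable almost
  surely. Every strategy is replaced by one that counts its steps up to \<open>N\<close>, reproduces the
  state-action marginals of the original strategy until then, and afterwards plays a
  memoryless attractor strategy. This does not change the cost up to time \<open>N\<close>, and the rest
  is bounded by a constant times the survival probability of that agent at time \<open>N\<close>, which
  tends to 0.\<close>

section \<open>Single-agent dynamics\<close>

lemma pmf_trans_pmf:
  assumes mdp: "is_mdp S Act P" and s: "s \<in> S" and a: "a \<in> enabled S Act P s"
  shows "pmf (trans_pmf S P s a) t = (if t \<in> S then P s a t else 0)"
proof -
  have fin: "finite S" and aA: "a \<in> Act" and sum1: "(\<Sum>t\<in>S. P s a t) = 1"
    using mdp a unfolding is_mdp_def enabled_def by auto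
  have nonneg: "\<And>t. 0 \<le> (if t \<in> S then P s a t else 0)"
    using mdp s aA unfolding is_mdp_def by auto
  have "(\<integral>\<^sup>+t. ennreal (if t \<in> S then P s a t else 0) \<partial>count_space UNIV)
        = (\<Sum>t\<in>S. ennreal (P s a t))"
    by (subst nn_integral_count_space'[OF fin]) auto
  also have "\<dots> = 1"
    using mdp s aA sum1 unfolding is_mdp_def by (subst sum_ennreal) auto
  finally show ?thesis
    unfolding trans_pmf_def using nonneg by (subst pmf_embed_pmf) auto
qed

lemma set_pmf_trans_pmf:
  assumes "is_mdp S Act P" "s \<in> S" "a \<in> enabled S Act P s"
  shows "set_pmf (trans_pmf S P s a) \<subseteq> S"
  using pmf_trans_pmf[OF assms] by (auto simp: set_pmf_eq split: if_splits)

lemma in_set_trans_pmf_iff: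
  assumes "is_mdp S Act P" "s \<in> S" "a \<in> enabled S Act P s"
  shows "t \<in> set_pmf (trans_pmf S P s a) \<longleftrightarrow> t \<in> S \<and> P s a t \<noteq> 0"
  using pmf_trans_pmf[OF assms, of t] by (auto simp: set_pmf_iff)

definition agent_step :: "'s set \<Rightarrow> ('s \<Rightarrow> 'a \<Rightarrow> 's \<Rightarrow> real) \<Rightarrow> 's set
     \<Rightarrow> ('s, 'a, 'm) strat \<Rightarrow> ('s \<times> 'm) option \<Rightarrow> ('s \<times> 'm) option pmf" where
  "agent_step S P Tg \<sigma> x = (case x of
        None \<Rightarrow> return_pmf None
      | Some (s, m) \<Rightarrow>
          bind_pmf (act \<sigma> s m) (\<lambda>a.
          bind_pmf (trans_pmf S P s a) (\<lambda>s'.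
          map_pmf (\<lambda>m'. if s' \<in> Tg then None else Some (s', m')) (upd \<sigma> m s'))))"

lemma agent_step_None [simp]: "agent_step S P Tg \<sigma> None = return_pmf None"
  by (simp add: agent_step_def)

lemma agent_dist_Suc_step:
  "agent_dist S P \<iota> Tg \<sigma> (Suc t) = bind_pmf (agent_dist S P \<iota> Tg \<sigma> t) (agent_step S P Tg \<sigma>)"
  by (simp add: agent_step_def[abs_def])

lemma set_pmf_agent_step_Some:
  assumes mdp: "is_mdp S Act P" and v: "valid_strat S Act P \<sigma>" and s: "s \<in> S" and m: "m \<in> mem \<sigma>"
    and y: "y \<in> set_pmf (agent_step S P Tg \<sigma> (Some (s, m)))"
  obtains a s' m' where "a \<in> set_pmf (act \<sigma> s m)" "a \<in> enabled S Act P s"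
    "s' \<in> S" "P s a s' \<noteq> 0" "m' \<in> mem \<sigma>" "y = (if s' \<in> Tg then None else Some (s', m'))"
proof -
  from y obtain a s' m' where
    a: "a \<in> set_pmf (act \<sigma> s m)" and s': "s' \<in> set_pmf (trans_pmf S P s a)"
    and m': "m' \<in> set_pmf (upd \<sigma> m s')"
    and yy: "y = (if s' \<in> Tg then None else Some (s', m'))"
    by (auto simp: agent_step_def split: if_splits)
  have aE: "a \<in> enabled S Act P s" using v s m a unfolding valid_strat_def by auto
  have "s' \<in> S" "P s a s' \<noteq> 0" using s' in_set_trans_pmf_iff[OF mdp s aE] by auto
  moreover have "m' \<in> mem \<sigma>" using v m \<open>s' \<in> S\<close> m' unfolding valid_strat_def by blast
  ultimately show ?thesis using that a aE yy by blast
qed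

lemma set_pmf_agent_dist:
  assumes mdp: "is_mdp S Act P" and v: "valid_strat S Act P \<sigma>" and \<iota>: "\<iota> \<in> S"
  shows "set_pmf (agent_dist S P \<iota> Tg \<sigma> t) \<subseteq> insert None (Some ` (S \<times> mem \<sigma>))"
proof (induction t)
  case 0
  then show ?case using v \<iota> unfolding valid_strat_def by auto
next
  case (Suc t)
  show ?case
  proof
    fix y assume "y \<in> set_pmf (agent_dist S P \<iota> Tg \<sigma> (Suc t))"
    then obtain x where x: "x \<in> set_pmf (agent_dist S P \<iota> Tg \<sigma> t)"
      and y: "y \<in> set_pmf (agent_step S P Tg \<sigma> x)"
      unfolding agent_dist_Suc_step by auto
    show "y \<in> insert None (Some ` (S \<times> mem \<sigma>))"
    proof (cases x)
      case None
      then show ?thesis using y by auto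
    next
      case (Some sm)
      with Suc x obtain s m where "x = Some (s, m)" "s \<in> S" "m \<in> mem \<sigma>" by auto
      with set_pmf_agent_step_Some[OF mdp v] y show ?thesis by (smt (verit) image_eqI insertCI mem_Sigma_iff)
    qed
  qed
qed

lemma pmf_agent_dist_Suc:
  assumes "finite X" "set_pmf (agent_dist S P \<iota> Tg \<sigma> t) \<subseteq> X"
  shows "pmf (agent_dist S P \<iota> Tg \<sigma> (Suc t)) y
     = (\<Sum>x\<in>X. pmf (agent_step S P Tg \<sigma> x) y * pmf (agent_dist S P \<iota> Tg \<sigma> t) x)"
  unfolding agent_dist_Suc_step pmf_bind using assms
  by (intro integral_measure_pmf_real) auto

lemma pmf_agent_step_Some:
  assumes mdp: "is_mdp S Act P" and v: "valid_strat S Act P \<sigma>" and s: "s \<in> S" and m: "m \<in> mem \<sigma>"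
  shows "pmf (agent_step S P Tg \<sigma> (Some (s, m))) y =
    (\<Sum>a\<in>Act. pmf (act \<sigma> s m) a * (\<Sum>s'\<in>S. P s a s' *
        pmf (map_pmf (\<lambda>m'. if s' \<in> Tg then None else Some (s', m')) (upd \<sigma> m s')) y))"
proof -
  let ?next = "\<lambda>s'. map_pmf (\<lambda>m'. if s' \<in> Tg then None else Some (s', m')) (upd \<sigma> m s')"
  have finA: "finite Act" and finS: "finite S" using mdp unfolding is_mdp_def by auto
  have actE: "set_pmf (act \<sigma> s m) \<subseteq> enabled S Act P s" using v s m unfolding valid_strat_def by auto
  have inner: "pmf (bind_pmf (trans_pmf S P s a) ?next) y = (\<Sum>s'\<in>S. P s a s' * pmf (?next s') y)"
    if aE: "a \<in> enabled S Act P s" for a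
  proof -
    have "pmf (bind_pmf (trans_pmf S P s a) ?next) y
        = (\<Sum>s'\<in>S. pmf (?next s') y * pmf (trans_pmf S P s a) s')"
      unfolding pmf_bind using finS set_pmf_trans_pmf[OF mdp s aE]
      by (intro integral_measure_pmf_real) auto
    then show ?thesis by (simp add: pmf_trans_pmf[OF mdp s aE] mult.commute)
  qed
  have "pmf (agent_step S P Tg \<sigma> (Some (s, m))) y =
     (\<Sum>a\<in>Act. pmf (bind_pmf (trans_pmf S P s a) ?next) y * pmf (act \<sigma> s m) a)"
    unfolding agent_step_def using finA actE
    by (simp add: pmf_bind) (intro integral_measure_pmf_real, auto simp: enabled_def)
  also have "\<dots> = (\<Sum>a\<in>Act. pmf (act \<sigma> s m) a * (\<Sum>s'\<in>S. P s a s' * pmf (?next s') y))"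
  proof (intro sum.cong refl)
    fix a assume "a \<in> Act"
    show "pmf (bind_pmf (trans_pmf S P s a) ?next) y * pmf (act \<sigma> s m) a
        = pmf (act \<sigma> s m) a * (\<Sum>s'\<in>S. P s a s' * pmf (?next s') y)"
      using actE inner by (cases "a \<in> set_pmf (act \<sigma> s m)") (auto simp: set_pmf_iff)
  qed
  finally show ?thesis .
qed

lemma pmf_map_pmf_Some_Pair:
  "pmf (map_pmf (\<lambda>m'. Some (s', m')) q) y =
     (case y of None \<Rightarrow> 0 | Some (s'', m'') \<Rightarrow> if s'' = s' then pmf q m'' else 0)"
proof (cases "\<exists>m''. y = Some (s', m'')")
  case True
  then obtain m'' where y: "y = Some (s', m'')" by blast
  have "inj (\<lambda>m'. Some (s', m'))" by (auto simp: inj_def)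
  from pmf_map_inj'[OF this] show ?thesis unfolding y by simp
next
  case False
  then show ?thesis by (auto simp: pmf_eq_0_set_pmf split: option.splits)
qed

lemma survive_nonneg: "0 \<le> survive S P \<iota> Tg \<sigma> t"
  unfolding survive_def by (simp add: pmf_le_1)

lemma survive_le_1: "survive S P \<iota> Tg \<sigma> t \<le> 1"
  unfolding survive_def by simp

lemma survive_Suc_le: "survive S P \<iota> Tg \<sigma> (Suc t) \<le> survive S P \<iota> Tg \<sigma> t"
proof -
  let ?d = "agent_dist S P \<iota> Tg \<sigma> t"
  have "pmf ?d None = measure_pmf.expectation ?d (indicator {None})"
    by (simp add: measure_pmf_single)
  also have "\<dots> \<le> measure_pmf.expectation ?d (\<lambda>x. pmf (agent_step S P Tg \<sigma> x) None)"
    by (intro integral_mono_AE)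
       (auto simp: pmf_le_1 split: split_indicator intro!: measure_pmf.integrable_const_bound[where B=1])
  also have "\<dots> = pmf (agent_dist S P \<iota> Tg \<sigma> (Suc t)) None"
    unfolding agent_dist_Suc_step pmf_bind ..
  finally show ?thesis unfolding survive_def by simp
qed

section \<open>A pigeonhole bound for nonnegative kernels\<close>

fun kpow :: "'m set \<Rightarrow> ('m \<Rightarrow> 'm \<Rightarrow> real) \<Rightarrow> nat \<Rightarrow> 'm \<Rightarrow> 'm \<Rightarrow> real" where
  "kpow M K 0 i j = of_bool (i = j)"
| "kpow M K (Suc t) i j = (\<Sum>l\<in>M. kpow M K t i l * K l j)"

text \<open>\<open>taboo_pow M K i t j\<close> is the weight of the \<open>t\<close>-step paths in \<open>M\<close> from \<open>i\<close> to \<open>j\<close>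
  that do not return to \<open>i\<close> after time 0.\<close>

fun taboo_pow :: "'m set \<Rightarrow> ('m \<Rightarrow> 'm \<Rightarrow> real) \<Rightarrow> 'm \<Rightarrow> nat \<Rightarrow> 'm \<Rightarrow> real" where
  "taboo_pow M K i 0 j = of_bool (j = i)"
| "taboo_pow M K i (Suc t) j = (if j = i then 0 else (\<Sum>l\<in>M. taboo_pow M K i t l * K l j))"

locale nonneg_kernel =
  fixes K :: "'m \<Rightarrow> 'm \<Rightarrow> real"
  assumes K_nonneg: "\<And>l j. 0 \<le> K l j"
begin

lemma kpow_nonneg: "0 \<le> kpow M K t i j"
  by (induction t arbitrary: j) (auto intro!: sum_nonneg mult_nonneg_nonneg K_nonneg)

lemma taboo_pow_nonneg: "0 \<le> taboo_pow M K i t j"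
  by (induction t arbitrary: j) (auto intro!: sum_nonneg mult_nonneg_nonneg K_nonneg)

lemma taboo_pow_le_kpow: "taboo_pow M K i t j \<le> kpow M K t i j"
proof (induction t arbitrary: j)
  case (Suc t)
  have "(\<Sum>l\<in>M. taboo_pow M K i t l * K l j) \<le> (\<Sum>l\<in>M. kpow M K t i l * K l j)"
    by (intro sum_mono mult_right_mono Suc K_nonneg)
  then show ?case using kpow_nonneg[of M "Suc t" i j] by auto
qed simp

lemma kpow_last_visit:
  "kpow M K t i j = (\<Sum>r\<le>t. kpow M K r i i * taboo_pow M K i (t - r) j)"
proof (induction t arbitrary: j)
  case (Suc t)
  have "kpow M K (Suc t) i j = (\<Sum>l\<in>M. (\<Sum>r\<le>t. kpow M K r i i * taboo_pow M K i (t - r) l) * K l j)"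
    using Suc by simp
  also have "\<dots> = (\<Sum>r\<le>t. kpow M K r i i * (\<Sum>l\<in>M. taboo_pow M K i (t - r) l * K l j))"
    by (simp add: sum_distrib_left sum_distrib_right mult.assoc) (rule sum.swap)
  finally have IH: "kpow M K (Suc t) i j
      = (\<Sum>r\<le>t. kpow M K r i i * (\<Sum>l\<in>M. taboo_pow M K i (t - r) l * K l j))" .
  have split: "(\<Sum>r\<le>Suc t. kpow M K r i i * taboo_pow M K i (Suc t - r) j) =
      kpow M K (Suc t) i i * of_bool (j = i) + (\<Sum>r\<le>t. kpow M K r i i * taboo_pow M K i (Suc (t - r)) j)"
    by (simp add: add.commute Suc_diff_le)
  show ?case
  proof (cases "j = i")
    case True
    then show ?thesis unfolding split by simp
  next
    case False
    then show ?thesis unfolding split IH by simp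
  qed
qed simp

lemma taboo_pow_Suc_avoid:
  assumes fin: "finite M" and i: "i \<in> M" and j: "j \<in> M - {i}"
  shows "taboo_pow M K i (Suc s) j = (\<Sum>l\<in>M - {i}. K i l * kpow (M - {i}) K s l j)"
  using j
proof (induction s arbitrary: j)
  case 0
  then show ?case using fin i by (simp add: eq_commute[of _ i])
next
  case (Suc s)
  have "taboo_pow M K i (Suc (Suc s)) j = (\<Sum>l\<in>M - {i}. taboo_pow M K i (Suc s) l * K l j)"
    using Suc.prems fin i by (simp add: sum.remove[of M i])
  also have "\<dots> = (\<Sum>l\<in>M - {i}. (\<Sum>l'\<in>M - {i}. K i l' * kpow (M - {i}) K s l' l) * K l j)"
    using Suc.IH by (intro sum.cong) auto
  also have "\<dots> = (\<Sum>l'\<in>M - {i}. K i l' * kpow (M - {i}) K (Suc s) l' j)"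
    by (simp add: sum_distrib_left sum_distrib_right mult.assoc) (rule sum.swap)
  finally show ?case .
qed

lemma kpow_row_sum_le_1:
  assumes rows: "\<And>l. l \<in> M \<Longrightarrow> (\<Sum>j\<in>M. K l j) \<le> 1" and i: "i \<in> M"
  shows "(\<Sum>j\<in>M. kpow M K t i j) \<le> 1"
proof (induction t)
  case 0
  show ?case using i by (cases "finite M") simp_all
next
  case (Suc t)
  have "(\<Sum>j\<in>M. kpow M K (Suc t) i j) = (\<Sum>l\<in>M. kpow M K t i l * (\<Sum>j\<in>M. K l j))"
    by (simp add: sum_distrib_left) (rule sum.swap)
  also have "\<dots> \<le> (\<Sum>l\<in>M. kpow M K t i l * 1)"
    by (intro sum_mono mult_left_mono rows kpow_nonneg) auto
  finally show ?case using Suc by simp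
qed

lemma kpow_le_1:
  assumes "\<And>l. l \<in> M \<Longrightarrow> (\<Sum>j\<in>M. K l j) \<le> 1" "finite M" "i \<in> M" "j \<in> M"
  shows "kpow M K t i j \<le> 1"
  using member_le_sum[of j M "kpow M K t i", OF _ kpow_nonneg] kpow_row_sum_le_1[of M i t] assms
  by fastforce

lemma returning_part_le:
  assumes "\<And>l. l \<in> M \<Longrightarrow> (\<Sum>j\<in>M. K l j) \<le> 1" "finite M" "i \<in> M"
  shows "(\<Sum>r<Suc n. kpow M K (Suc r) i i * taboo_pow M K i (n - r) j) \<le> (\<Sum>k<Suc n. kpow M K k i j)"
proof -
  have "(\<Sum>r<Suc n. kpow M K (Suc r) i i * taboo_pow M K i (n - r) j) \<le> (\<Sum>r<Suc n. kpow M K (n - r) i j)"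
  proof (intro sum_mono)
    fix r
    have "kpow M K (Suc r) i i * taboo_pow M K i (n - r) j \<le> 1 * taboo_pow M K i (n - r) j"
      using assms by (intro mult_right_mono kpow_le_1 taboo_pow_nonneg)
    also have "\<dots> \<le> kpow M K (n - r) i j" using taboo_pow_le_kpow by simp
    finally show "kpow M K (Suc r) i i * taboo_pow M K i (n - r) j \<le> kpow M K (n - r) i j" .
  qed
  also have "(\<Sum>r<Suc n. kpow M K (n - r) i j) = (\<Sum>k<Suc n. kpow M K k i j)"
    by (rule sum.reindex_bij_witness[where i="\<lambda>k. n - k" and j="\<lambda>k. n - k"]) auto
  finally show ?thesis .
qed

text \<open>If \<open>M\<close> has at most \<open>n\<close> elements, the \<open>n\<close>-step weight from \<open>i\<close> to \<open>j\<close> is controlled by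
  the weights of the shorter paths: a path of length \<open>n\<close> either revisits \<open>i\<close> (and then
  contains a shorter path from \<open>i\<close> to \<open>j\<close>), or it lives in \<open>M - {i}\<close> after its first step,
  where induction applies.\<close>

theorem kpow_pigeonhole:
  assumes "finite M" "card M \<le> n" "1 \<le> n" "i \<in> M" "j \<in> M"
    and rows: "\<And>l. l \<in> M \<Longrightarrow> (\<Sum>j\<in>M. K l j) \<le> 1"
  shows "kpow M K n i j \<le> real n * (\<Sum>k<n. kpow M K k i j)"
  using assms
proof (induction n arbitrary: M i j)
  case (Suc n)
  note fin = \<open>finite M\<close> and rows = Suc.prems(6)
  let ?M' = "M - {i}"
  let ?S = "\<Sum>k<Suc n. kpow M K k i j"
  have "kpow M K (Suc n) i j
      = taboo_pow M K i (Suc n) j + (\<Sum>r<Suc n. kpow M K (Suc r) i i * taboo_pow M K i (n - r) j)"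
    by (subst kpow_last_visit, subst sum.atMost_Suc_shift) (simp add: lessThan_Suc_atMost)
  moreover have "(\<Sum>r<Suc n. kpow M K (Suc r) i i * taboo_pow M K i (n - r) j) \<le> ?S"
    using rows fin Suc.prems(4) by (rule returning_part_le)
  moreover have "taboo_pow M K i (Suc n) j \<le> real n * ?S"
  proof (cases "j = i")
    case False
    then have j': "j \<in> ?M'" using Suc.prems by auto
    have card': "card ?M' \<le> n" using Suc.prems by (simp add: card_Diff_singleton)
    moreover have "0 < card ?M'" using j' fin by (auto simp: card_gt_0_iff)
    ultimately have n1: "1 \<le> n" by simp
    have rows': "(\<Sum>j\<in>?M'. K l j) \<le> 1" if "l \<in> ?M'" for l
      using rows[of l] that fin sum_mono2[of M ?M' "K l"] K_nonneg by force
    have IH: "kpow ?M' K n l j \<le> real n * (\<Sum>k<n. kpow ?M' K k l j)" if "l \<in> ?M'" for l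
      using Suc.IH[OF _ card' n1 that j' rows'] fin by simp
    have "taboo_pow M K i (Suc n) j \<le> (\<Sum>l\<in>?M'. K i l * (real n * (\<Sum>k<n. kpow ?M' K k l j)))"
      unfolding taboo_pow_Suc_avoid[OF fin Suc.prems(4) j'] by (intro sum_mono mult_left_mono IH K_nonneg)
    also have "\<dots> = real n * (\<Sum>k<n. taboo_pow M K i (Suc k) j)"
      unfolding taboo_pow_Suc_avoid[OF fin Suc.prems(4) j']
      by (simp add: sum_distrib_left mult.left_commute) (rule sum.swap)
    also have "\<dots> \<le> real n * (\<Sum>k<n. kpow M K (Suc k) i j)"
      by (intro mult_left_mono sum_mono taboo_pow_le_kpow) auto
    also have "\<dots> \<le> real n * ?S"
      unfolding sum.lessThan_Suc_shift by (intro mult_left_mono) (auto simp: kpow_nonneg)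
    finally show ?thesis .
  qed (simp add: sum_nonneg kpow_nonneg)
  ultimately show ?case by (simp add: algebra_simps)
qed simp

end

section \<open>A survival recursion with a deadline\<close>

text \<open>Bellman values of a single agent that, at time \<open>t\<close>, still sits in its start state
  and must accumulate survival probabilities up to the deadline \<open>n + 2\<close>: waiting hits the
  target with probability \<open>1/2\<close> and stays put otherwise, gambling hits it with probability
  \<open>5/8\<close> and otherwise traps the agent for good.\<close>

definition opt_cost :: "nat \<Rightarrow> nat \<Rightarrow> real" where
  "opt_cost n t = (if t \<le> n then 2 - (5/8) * (1/2)^(n - t) else if t = n + 1 then 1 else 0)"

definition wait_cost :: "nat \<Rightarrow> nat \<Rightarrow> real" where
  "wait_cost n t = 1 + opt_cost n (Suc t) / 2"

definition gamble_cost :: "nat \<Rightarrow> nat \<Rightarrow> real" where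
  "gamble_cost n t = 1 + 3/8 * real (n + 1 - t)"

definition regret :: "nat \<Rightarrow> (nat \<Rightarrow> real) \<Rightarrow> (nat \<Rightarrow> real) \<Rightarrow> nat \<Rightarrow> real" where
  "regret n a b t = (a t - b t) * (wait_cost n t - opt_cost n t) + b t * (gamble_cost n t - opt_cost n t)"

lemma regret_before_deadline:
  assumes "t < n" shows "regret n a b t = b t * (gamble_cost n t - opt_cost n t)"
proof -
  have "n - t = Suc (n - Suc t)" using assms by simp
  then have "wait_cost n t = opt_cost n t"
    unfolding wait_cost_def opt_cost_def using assms by simp
  then show ?thesis unfolding regret_def by simp
qed

lemma gamble_cost_gap:
  assumes "t < n" shows "1/16 \<le> gamble_cost n t - opt_cost n t"
proof -
  define j where "j = n - t"
  have j: "1 \<le> j" "real (n + 1 - t) = real j + 1" using assms unfolding j_def by auto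
  have "gamble_cost n t - opt_cost n t = 3/8 * (real j + 1) - 1 + 5/8 * (1/2)^j"
    unfolding gamble_cost_def opt_cost_def j(2) using assms by (simp add: j_def)
  moreover have "1/16 \<le> 3/8 * (real j + 1) - 1 + 5/8 * (1/2::real)^j"
  proof (cases "j = 1")
    case False
    then have "2 \<le> real j" using j by simp
    then show ?thesis by (simp add: add_increasing2)
  qed simp
  ultimately show ?thesis by simp
qed

text \<open>\<open>a t\<close> is the probability of being alive in the start state at time \<open>t\<close>, \<open>b t\<close> the
  probability of gambling there at time \<open>t\<close>, and \<open>s t\<close> the survival probability.\<close>

locale gamble_recursion =
  fixes n :: nat and a b s :: "nat \<Rightarrow> real"
  assumes a_0: "a 0 = 1" and s_0: "s 0 = 1"
    and a_Suc: "\<And>t. a (Suc t) = (a t - b t) / 2"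
    and s_Suc: "\<And>t. s (Suc t) = s t - a t / 2 - b t / 8"
begin

lemma sum_survival_from:
  assumes "k \<le> n + 2"
  shows "(\<Sum>t'\<in>{n + 2 - k..<n + 2}. s t') =
     a (n + 2 - k) * opt_cost n (n + 2 - k) + (s (n + 2 - k) - a (n + 2 - k)) * real k
     + (\<Sum>t'\<in>{n + 2 - k..<n + 2}. regret n a b t')"
  using assms
proof (induction k)
  case 0
  then show ?case by (simp add: opt_cost_def)
next
  case (Suc k)
  define t where "t = n + 2 - Suc k"
  have t: "n + 2 - k = Suc t" "t < n + 2" "real (n + 1 - t) = real k"
    using Suc.prems unfolding t_def by auto
  have split: "{t..<n + 2} = insert t {Suc t..<n + 2}" using t by auto
  have IH: "(\<Sum>t'\<in>{Suc t..<n + 2}. s t') =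
     a (Suc t) * opt_cost n (Suc t) + (s (Suc t) - a (Suc t)) * real k
     + (\<Sum>t'\<in>{Suc t..<n + 2}. regret n a b t')"
    using Suc.IH Suc.prems unfolding t(1) by simp
  have "(\<Sum>t'\<in>{t..<n + 2}. s t') = s t + (\<Sum>t'\<in>{Suc t..<n + 2}. s t')"
    unfolding split by simp
  also have "\<dots> = a t * opt_cost n t + (s t - a t) * real (Suc k)
     + (regret n a b t + (\<Sum>t'\<in>{Suc t..<n + 2}. regret n a b t'))"
    unfolding IH a_Suc s_Suc regret_def wait_cost_def gamble_cost_def t(3) by (simp add: field_simps)
  also have "\<dots> = a t * opt_cost n t + (s t - a t) * real (Suc k) + (\<Sum>t'\<in>{t..<n + 2}. regret n a b t')"
    unfolding split by simp
  finally show ?case unfolding t_def .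
qed

lemma sum_survival_eq:
  "(\<Sum>t<n + 2. s t) = opt_cost n 0 + (\<Sum>t<n. regret n a b t) + (a n - b n) / 8"
  using sum_survival_from[of "n + 2"]
  by (simp add: a_0 s_0 lessThan_atLeast0 regret_def wait_cost_def gamble_cost_def opt_cost_def)

lemma sum_survival_eq_opt_cost:
  assumes "\<And>t. t < n \<Longrightarrow> b t = 0" "b n = a n"
  shows "(\<Sum>t<n + 2. s t) = opt_cost n 0"
  using sum_survival_eq assms by (simp add: regret_before_deadline)

lemma a_lower:
  assumes "\<And>t. 0 \<le> b t"
  shows "(1/2)^t - (\<Sum>k<t. b k) \<le> a t"
proof (induction t)
  case (Suc t)
  have "0 \<le> (\<Sum>k<t. b k)" by (intro sum_nonneg assms)
  then show ?case using Suc assms[of t] by (simp add: a_Suc)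
qed (simp add: a_0)

lemma sum_survival_lower:
  assumes b_nonneg: "\<And>t. 0 \<le> b t" and b_le_a: "\<And>t. b t \<le> a t"
    and late_gamble: "b n \<le> real n * (\<Sum>k<n. b k)"
  shows "opt_cost n 0 + (1/2)^n / (32 * (real n + 1)) \<le> (\<Sum>t<n + 2. s t)"
proof -
  define B where "B = (\<Sum>k<n. b k)"
  define c :: real where "c = (1/2)^n"
  have B: "0 \<le> B" unfolding B_def by (intro sum_nonneg b_nonneg)
  have "(\<Sum>t<n. b t * (1/16)) \<le> (\<Sum>t<n. regret n a b t)"
    by (intro sum_mono) (simp only: regret_before_deadline lessThan_iff mult_left_mono gamble_cost_gap b_nonneg)
  then have early: "B / 16 \<le> (\<Sum>t<n. regret n a b t)"
    unfolding B_def by (simp add: sum_divide_distrib)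
  have late: "c - B - real n * B \<le> a n - b n"
    using a_lower[OF b_nonneg, of n] late_gamble unfolding B_def c_def by linarith
  have "c / (32 * (real n + 1)) \<le> B / 16 + (a n - b n) / 8"
  proof (cases "c \<le> 2 * (real n + 1) * B")
    case True
    then have "c / (32 * (real n + 1)) \<le> B / 16" by (simp add: field_simps)
    moreover have "0 \<le> (a n - b n) / 8" using b_le_a[of n] by simp
    ultimately show ?thesis by linarith
  next
    case False
    then have "c / 2 \<le> a n - b n" using late by (simp add: algebra_simps)
    have "c / (32 * (real n + 1)) \<le> c / 16"
      unfolding c_def by (intro divide_left_mono) auto
    also have "\<dots> \<le> (a n - b n) / 8" using \<open>c / 2 \<le> a n - b n\<close> by simp
    also have "\<dots> \<le> B / 16 + (a n - b n) / 8" using B by simp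
    finally show ?thesis .
  qed
  then show ?thesis using sum_survival_eq early unfolding c_def by linarith
qed

end

section \<open>Memory \<open>n + 1\<close> beats memory \<open>n\<close>\<close>

text \<open>Agent 0 (the gambler) starts in state 0 with target \<open>{1}\<close>: action 0 stays in 0 or
  hits 1 with probability \<open>1/2\<close> each, action 1 hits 1 with probability \<open>5/8\<close> and otherwise
  falls into the trap 2. Agent 1 (the timer) walks deterministically along \<open>3, \<dots>, n + 5\<close>
  and hits its target at time \<open>n + 2\<close>.\<close>

definition weight_at :: "nat \<Rightarrow> real \<Rightarrow> nat \<Rightarrow> real" where
  "weight_at c x t = (if t = c then x else 0)"

definition timer_P :: "nat \<Rightarrow> nat \<Rightarrow> nat \<Rightarrow> nat \<Rightarrow> real" where
  "timer_P n s a t = (if s = 0 \<and> a = 0 then weight_at 0 (1/2) t + weight_at 1 (1/2) t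
     else if s = 0 \<and> a = 1 then weight_at 1 (5/8) t + weight_at 2 (3/8) t
     else if a = 0 then (if 3 \<le> s \<and> s < n + 5 then weight_at (s + 1) 1 t else weight_at s 1 t)
     else 0)"

definition timer_S :: "nat \<Rightarrow> nat set" where "timer_S n = {..n + 5}"
definition timer_Act :: "nat set" where "timer_Act = {0, 1}"
definition timer_iota :: "nat \<Rightarrow> nat" where "timer_iota i = (if i = 0 then 0 else 3)"
definition timer_T :: "nat \<Rightarrow> nat \<Rightarrow> nat set" where "timer_T n i = (if i = 0 then {1} else {n + 5})"

lemma sum_weight_at: "finite A \<Longrightarrow> (\<Sum>t\<in>A. weight_at c x t * F t) = (if c \<in> A then x * F c else 0)"
  by (simp add: weight_at_def if_distrib[of "\<lambda>y. y * _"] sum.delta' cong: if_cong)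

lemma sum_timer_P:
  "(\<Sum>t\<in>timer_S n. timer_P n s a t * F t) =
     (if s = 0 \<and> a = 0 then (F 0 + F 1) / 2
      else if s = 0 \<and> a = 1 then 5/8 * F 1 + 3/8 * F 2
      else if a = 0 then (if 3 \<le> s \<and> s < n + 5 then F (s + 1) else if s \<in> timer_S n then F s else 0)
      else 0)"
  unfolding timer_P_def by (auto simp: distrib_right sum.distrib sum_weight_at timer_S_def)

lemma enabled_timer:
  assumes "s \<in> timer_S n"
  shows "enabled (timer_S n) timer_Act (timer_P n) s = (if s = 0 then {0, 1} else {0})"
  using assms sum_timer_P[of n s _ "\<lambda>_. 1"] unfolding enabled_def timer_Act_def by auto

lemma mdp_timer: "is_mdp (timer_S n) timer_Act (timer_P n)"
  unfolding is_mdp_def using enabled_timer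
  by (auto simp: timer_S_def timer_Act_def timer_P_def weight_at_def)

lemma mssp_timer: "is_mssp (timer_S n) timer_Act (timer_P n) 2 timer_iota (timer_T n)"
  unfolding is_mssp_def using mdp_timer
  by (auto simp: timer_iota_def timer_T_def timer_S_def less_Suc_eq)

lemma timer_dist_alive:
  assumes v: "valid_strat (timer_S n) timer_Act (timer_P n) \<sigma>" and t: "t < n + 2"
  shows "set_pmf (agent_dist (timer_S n) (timer_P n) 3 {n + 5} \<sigma> t) \<subseteq> Some ` ({3 + t} \<times> mem \<sigma>)"
  using t
proof (induction t)
  case 0
  then show ?case using v unfolding valid_strat_def by auto
next
  case (Suc t)
  show ?case
  proof
    fix y assume "y \<in> set_pmf (agent_dist (timer_S n) (timer_P n) 3 {n + 5} \<sigma> (Suc t))"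
    then obtain x where x: "x \<in> set_pmf (agent_dist (timer_S n) (timer_P n) 3 {n + 5} \<sigma> t)"
      and y: "y \<in> set_pmf (agent_step (timer_S n) (timer_P n) {n + 5} \<sigma> x)"
      unfolding agent_dist_Suc_step by auto
    from Suc x obtain m where xm: "x = Some (3 + t, m)" and m: "m \<in> mem \<sigma>" by auto
    have s: "3 + t \<in> timer_S n" using Suc.prems by (simp add: timer_S_def)
    from set_pmf_agent_step_Some[OF mdp_timer v s m] y xm obtain a s' m' where
      "a \<in> enabled (timer_S n) timer_Act (timer_P n) (3 + t)" "s' \<in> timer_S n" "timer_P n (3 + t) a s' \<noteq> 0"
      "m' \<in> mem \<sigma>" "y = (if s' \<in> {n + 5} then None else Some (s', m'))"
      by blast
    with enabled_timer[OF s] Suc.prems show "y \<in> Some ` ({3 + Suc t} \<times> mem \<sigma>)"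
      by (auto simp: timer_P_def weight_at_def split: if_splits)
  qed
qed

lemma timer_dist_dead:
  assumes v: "valid_strat (timer_S n) timer_Act (timer_P n) \<sigma>" and t: "n + 2 \<le> t"
  shows "agent_dist (timer_S n) (timer_P n) 3 {n + 5} \<sigma> t = return_pmf None"
  using t
proof (induction t rule: dec_induct)
  case base
  have "set_pmf (agent_dist (timer_S n) (timer_P n) 3 {n + 5} \<sigma> (Suc (n + 1))) \<subseteq> {None}"
  proof
    fix y assume "y \<in> set_pmf (agent_dist (timer_S n) (timer_P n) 3 {n + 5} \<sigma> (Suc (n + 1)))"
    then obtain x where x: "x \<in> set_pmf (agent_dist (timer_S n) (timer_P n) 3 {n + 5} \<sigma> (n + 1))"
      and y: "y \<in> set_pmf (agent_step (timer_S n) (timer_P n) {n + 5} \<sigma> x)"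
      unfolding agent_dist_Suc_step by auto
    from timer_dist_alive[OF v, of "n + 1"] x obtain m where xm: "x = Some (n + 4, m)" and m: "m \<in> mem \<sigma>"
      by auto
    have s: "n + 4 \<in> timer_S n" by (simp add: timer_S_def)
    from set_pmf_agent_step_Some[OF mdp_timer v s m] y xm obtain a s' m' where
      "a \<in> enabled (timer_S n) timer_Act (timer_P n) (n + 4)" "s' \<in> timer_S n" "timer_P n (n + 4) a s' \<noteq> 0"
      "y = (if s' \<in> {n + 5} then None else Some (s', m'))"
      by blast
    with enabled_timer[OF s] show "y \<in> {None}"
      by (auto simp: timer_P_def weight_at_def split: if_splits)
  qed
  moreover have "n + 2 = Suc (n + 1)" by simp
  ultimately show ?case by (simp only: set_pmf_subset_singleton)
qed (simp add: bind_return_pmf)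

lemma timer_survive:
  assumes "valid_strat (timer_S n) timer_Act (timer_P n) \<sigma>"
  shows "survive (timer_S n) (timer_P n) 3 {n + 5} \<sigma> t = of_bool (t < n + 2)"
proof (cases "t < n + 2")
  case True
  then show ?thesis
    using timer_dist_alive[OF assms True] by (auto simp: survive_def pmf_eq_0_set_pmf)
qed (simp add: survive_def timer_dist_dead[OF assms])

lemma E_MHit_timer:
  assumes "valid_profile (timer_S n) timer_Act (timer_P n) 2 \<pi>"
  shows "E_MHit (timer_S n) (timer_P n) 2 timer_iota (timer_T n) \<pi>
       = ennreal (\<Sum>t<n + 2. survive (timer_S n) (timer_P n) 0 {1} (\<pi> 0) t)"
proof -
  have v: "valid_strat (timer_S n) timer_Act (timer_P n) (\<pi> 1)"
    using assms unfolding valid_profile_def by auto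
  have "prob_MHit_gt (timer_S n) (timer_P n) 2 timer_iota (timer_T n) \<pi> t =
      (if t < n + 2 then survive (timer_S n) (timer_P n) 0 {1} (\<pi> 0) t else 0)" for t
    unfolding prob_MHit_gt_def using timer_survive[OF v, of t]
    by (simp add: numeral_2_eq_2 timer_iota_def timer_T_def)
  then have "E_MHit (timer_S n) (timer_P n) 2 timer_iota (timer_T n) \<pi>
      = (\<Sum>t<n + 2. ennreal (survive (timer_S n) (timer_P n) 0 {1} (\<pi> 0) t))"
    unfolding E_MHit_def by (subst suminf_finite[of "{..<n + 2}"]) auto
  also have "\<dots> = ennreal (\<Sum>t<n + 2. survive (timer_S n) (timer_P n) 0 {1} (\<pi> 0) t)"
    by (rule sum_ennreal) (rule survive_nonneg)
  finally show ?thesis .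
qed

lemma in_timer_S [simp]: "0 \<in> timer_S n" "1 \<in> timer_S n" "2 \<in> timer_S n"
  by (auto simp: timer_S_def)

lemma timer_P_from_start_or_trap:
  assumes "s = 0 \<or> s = 2" "a \<in> enabled (timer_S n) timer_Act (timer_P n) s" "timer_P n s a s' \<noteq> 0"
  shows "s' = 0 \<or> s' = 1 \<or> s' = 2"
proof -
  have "a \<in> (if s = 0 then {0, 1} else {0})" using assms(1,2) enabled_timer[of s n] by auto
  then show ?thesis using assms(1,3) by (auto simp: timer_P_def weight_at_def split: if_splits)
qed

locale gambler =
  fixes n :: nat and \<sigma> :: "(nat, nat, nat) strat"
  assumes valid: "valid_strat (timer_S n) timer_Act (timer_P n) \<sigma>" and finite_mem: "finite (mem \<sigma>)"
begin

abbreviation law :: "nat \<Rightarrow> (nat \<times> nat) option pmf" where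
  "law t \<equiv> agent_dist (timer_S n) (timer_P n) 0 {1} \<sigma> t"

abbreviation step :: "(nat \<times> nat) option \<Rightarrow> (nat \<times> nat) option pmf" where
  "step \<equiv> agent_step (timer_S n) (timer_P n) {1} \<sigma>"

definition start_mass :: "nat \<Rightarrow> nat \<Rightarrow> real" where
  "start_mass t m = pmf (law t) (Some (0, m))"

definition p_wait :: "nat \<Rightarrow> real" where "p_wait m = pmf (act \<sigma> 0 m) 0"
definition p_gamble :: "nat \<Rightarrow> real" where "p_gamble m = pmf (act \<sigma> 0 m) 1"

definition alive_start :: "nat \<Rightarrow> real" where "alive_start t = (\<Sum>m\<in>mem \<sigma>. start_mass t m)"
definition gamble :: "nat \<Rightarrow> real" where "gamble t = (\<Sum>m\<in>mem \<sigma>. start_mass t m * p_gamble m)"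
definition surv :: "nat \<Rightarrow> real" where "surv t = survive (timer_S n) (timer_P n) 0 {1} \<sigma> t"

lemma set_act:
  assumes "m \<in> mem \<sigma>"
  shows "set_pmf (act \<sigma> 0 m) \<subseteq> {0, 1}" "set_pmf (act \<sigma> 2 m) \<subseteq> {0}"
proof -
  have act: "set_pmf (act \<sigma> s m) \<subseteq> enabled (timer_S n) timer_Act (timer_P n) s" if "s \<in> timer_S n" for s
    using valid assms that unfolding valid_strat_def by blast
  show "set_pmf (act \<sigma> 0 m) \<subseteq> {0, 1}" using act[of 0] enabled_timer[of 0 n] by simp
  show "set_pmf (act \<sigma> 2 m) \<subseteq> {0}" using act[of 2] enabled_timer[of 2 n] by simp
qed

lemma p_wait_plus_p_gamble: "m \<in> mem \<sigma> \<Longrightarrow> p_wait m + p_gamble m = 1"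
  using sum_pmf_eq_1[of "{0::nat, 1}" "act \<sigma> 0 m"] set_act unfolding p_wait_def p_gamble_def by simp

lemma sum_upd: "m \<in> mem \<sigma> \<Longrightarrow> s \<in> timer_S n \<Longrightarrow> (\<Sum>m'\<in>mem \<sigma>. pmf (upd \<sigma> m s) m') = 1"
  using valid finite_mem unfolding valid_strat_def by (intro sum_pmf_eq_1) auto

lemma set_pmf_law: "set_pmf (law t) \<subseteq> insert None (Some ` ({0, 2} \<times> mem \<sigma>))"
proof (induction t)
  case 0
  then show ?case using valid unfolding valid_strat_def by auto
next
  case (Suc t)
  show ?case
  proof
    fix y assume "y \<in> set_pmf (law (Suc t))"
    then obtain x where x: "x \<in> set_pmf (law t)" and y: "y \<in> set_pmf (step x)"
      unfolding agent_dist_Suc_step by auto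
    show "y \<in> insert None (Some ` ({0, 2} \<times> mem \<sigma>))"
    proof (cases x)
      case (Some p)
      with Suc x obtain s m where p: "x = Some (s, m)" and s: "s = 0 \<or> s = 2" and m: "m \<in> mem \<sigma>"
        by auto
      then have sS: "s \<in> timer_S n" by auto
      from set_pmf_agent_step_Some[OF mdp_timer valid sS m] y p obtain a s' m' where
        a: "a \<in> enabled (timer_S n) timer_Act (timer_P n) s" and P: "timer_P n s a s' \<noteq> 0"
        and m': "m' \<in> mem \<sigma>" and y': "y = (if s' \<in> {1} then None else Some (s', m'))"
        by blast
      have "s' = 0 \<or> s' = 1 \<or> s' = 2" using timer_P_from_start_or_trap[OF s a P] .
      then show ?thesis using y' m' by auto
    qed (use y in simp)
  qed
qed

lemma sum_over_support:
  "(\<Sum>x\<in>insert None (Some ` ({0::nat, 2} \<times> mem \<sigma>)). f x)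
     = f None + (\<Sum>m\<in>mem \<sigma>. f (Some (0, m))) + (\<Sum>m\<in>mem \<sigma>. f (Some (2, m)))"
proof -
  have "(\<Sum>x\<in>Some ` ({0::nat, 2} \<times> mem \<sigma>). f x) = (\<Sum>s\<in>{0::nat, 2}. \<Sum>m\<in>mem \<sigma>. f (Some (s, m)))"
    by (simp add: sum.reindex sum.cartesian_product split_def)
  then show ?thesis using finite_mem by (simp add: add.assoc)
qed

lemma pmf_step_start:
  assumes m: "m \<in> mem \<sigma>"
  shows "pmf (step (Some (0, m))) (Some (0, m')) = p_wait m / 2 * pmf (upd \<sigma> m 0) m'"
    and "pmf (step (Some (0, m))) None = p_wait m / 2 + 5/8 * p_gamble m"
  unfolding pmf_agent_step_Some[OF mdp_timer valid in_timer_S(1) m] timer_Act_def sum_timer_P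
  by (simp_all add: pmf_map_pmf_Some_Pair p_wait_def p_gamble_def)

lemma pmf_step_trap:
  assumes m: "m \<in> mem \<sigma>"
  shows "pmf (step (Some (2, m))) (Some (0, m')) = 0" and "pmf (step (Some (2, m))) None = 0"
proof -
  have "pmf (act \<sigma> 2 m) 1 = 0" using set_act(2)[OF m] by (auto simp: pmf_eq_0_set_pmf)
  then show "pmf (step (Some (2, m))) (Some (0, m')) = 0" and "pmf (step (Some (2, m))) None = 0"
    unfolding pmf_agent_step_Some[OF mdp_timer valid in_timer_S(3) m] timer_Act_def sum_timer_P
    by (simp_all add: pmf_map_pmf_Some_Pair)
qed

lemma pmf_law_Suc:
  "pmf (law (Suc t)) y = of_bool (y = None) * pmf (law t) None
     + (\<Sum>m\<in>mem \<sigma>. start_mass t m * pmf (step (Some (0, m))) y)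
     + (\<Sum>m\<in>mem \<sigma>. pmf (law t) (Some (2, m)) * pmf (step (Some (2, m))) y)"
  using pmf_agent_dist_Suc[OF _ set_pmf_law] finite_mem
  unfolding sum_over_support start_mass_def by (simp add: mult.commute split: split_indicator)

lemma start_mass_Suc:
  "start_mass (Suc t) m' = (\<Sum>m\<in>mem \<sigma>. start_mass t m * (p_wait m / 2 * pmf (upd \<sigma> m 0) m'))"
proof -
  have start: "(\<Sum>m\<in>mem \<sigma>. start_mass t m * pmf (step (Some (0, m))) (Some (0, m')))
      = (\<Sum>m\<in>mem \<sigma>. start_mass t m * (p_wait m / 2 * pmf (upd \<sigma> m 0) m'))"
    by (intro sum.cong refl) (simp only: pmf_step_start)
  have trap: "(\<Sum>m\<in>mem \<sigma>. pmf (law t) (Some (2, m)) * pmf (step (Some (2, m))) (Some (0, m'))) = 0"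
    by (intro sum.neutral ballI) (simp only: pmf_step_trap mult_zero_right)
  show ?thesis unfolding start_mass_def[of "Suc t"] pmf_law_Suc start trap by simp
qed

lemma pmf_law_Suc_None:
  "pmf (law (Suc t)) None = pmf (law t) None + (\<Sum>m\<in>mem \<sigma>. start_mass t m * (p_wait m / 2 + 5/8 * p_gamble m))"
proof -
  have start: "(\<Sum>m\<in>mem \<sigma>. start_mass t m * pmf (step (Some (0, m))) None)
      = (\<Sum>m\<in>mem \<sigma>. start_mass t m * (p_wait m / 2 + 5/8 * p_gamble m))"
    by (intro sum.cong refl) (simp only: pmf_step_start)
  have trap: "(\<Sum>m\<in>mem \<sigma>. pmf (law t) (Some (2, m)) * pmf (step (Some (2, m))) None) = 0"
    by (intro sum.neutral ballI) (simp only: pmf_step_trap mult_zero_right)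
  show ?thesis unfolding pmf_law_Suc start trap by simp
qed

lemma start_mass_0: "start_mass 0 m = pmf (init \<sigma>) m"
  unfolding start_mass_def by (simp add: pmf_map_pmf_Some_Pair)

lemma start_mass_nonneg: "0 \<le> start_mass t m"
  unfolding start_mass_def by simp

lemma p_gamble_le_1: "p_gamble m \<le> 1"
  unfolding p_gamble_def by (rule pmf_le_1)

lemma alive_start_Suc: "alive_start (Suc t) = (alive_start t - gamble t) / 2"
proof -
  have "alive_start (Suc t) = (\<Sum>m\<in>mem \<sigma>. start_mass t m * p_wait m / 2 * (\<Sum>m'\<in>mem \<sigma>. pmf (upd \<sigma> m 0) m'))"
    unfolding alive_start_def start_mass_Suc
    by (subst sum.swap) (simp add: sum_distrib_left mult.assoc)
  also have "\<dots> = (\<Sum>m\<in>mem \<sigma>. start_mass t m * (1 - p_gamble m) / 2)"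
    by (intro sum.cong refl) (simp add: sum_upd p_wait_plus_p_gamble[symmetric])
  also have "\<dots> = (alive_start t - gamble t) / 2"
    unfolding alive_start_def gamble_def
    by (simp add: sum_divide_distrib[symmetric] sum_subtractf algebra_simps)
  finally show ?thesis .
qed

lemma surv_Suc: "surv (Suc t) = surv t - alive_start t / 2 - gamble t / 8"
proof -
  have "(\<Sum>m\<in>mem \<sigma>. start_mass t m * (p_wait m / 2 + 5/8 * p_gamble m))
      = (\<Sum>m\<in>mem \<sigma>. start_mass t m / 2 + start_mass t m * p_gamble m / 8)"
  proof (intro sum.cong refl)
    fix m assume "m \<in> mem \<sigma>"
    then have p: "p_wait m = 1 - p_gamble m" using p_wait_plus_p_gamble by (simp add: eq_diff_eq)
    show "start_mass t m * (p_wait m / 2 + 5/8 * p_gamble m) = start_mass t m / 2 + start_mass t m * p_gamble m / 8"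
      unfolding p by (simp add: field_simps)
  qed
  also have "\<dots> = alive_start t / 2 + gamble t / 8"
    unfolding alive_start_def gamble_def by (simp add: sum.distrib sum_divide_distrib[symmetric])
  finally show ?thesis unfolding surv_def survive_def pmf_law_Suc_None by simp
qed

lemma gamble_recursion: "gamble_recursion alive_start gamble surv"
proof
  show "alive_start 0 = 1"
    unfolding alive_start_def start_mass_0 using valid finite_mem unfolding valid_strat_def
    by (intro sum_pmf_eq_1) auto
  show "surv 0 = 1" unfolding surv_def survive_def by (simp add: pmf_map_pmf_Some_Pair)
qed (rule alive_start_Suc, rule surv_Suc)

lemma gamble_nonneg: "0 \<le> gamble t"
  unfolding gamble_def p_gamble_def by (intro sum_nonneg mult_nonneg_nonneg start_mass_nonneg) simp

lemma gamble_le_alive_start: "gamble t \<le> alive_start t"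
  unfolding alive_start_def gamble_def
  by (intro sum_mono mult_left_le start_mass_nonneg p_gamble_le_1)

definition wait_kernel :: "nat \<Rightarrow> nat \<Rightarrow> real" where
  "wait_kernel l j = p_wait l / 2 * pmf (upd \<sigma> l 0) j"

lemma nonneg_kernel_wait: "nonneg_kernel wait_kernel"
  by standard (simp add: wait_kernel_def p_wait_def)

lemma wait_kernel_row_sum:
  assumes "l \<in> mem \<sigma>" shows "(\<Sum>j\<in>mem \<sigma>. wait_kernel l j) \<le> 1"
proof -
  have "(\<Sum>j\<in>mem \<sigma>. wait_kernel l j) = p_wait l / 2"
    unfolding wait_kernel_def sum_distrib_left[symmetric] using sum_upd[OF assms, of 0] by simp
  also have "\<dots> \<le> 1" unfolding p_wait_def using pmf_le_1[of "act \<sigma> 0 l" 0] by simp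
  finally show ?thesis .
qed

lemma start_mass_kpow:
  "m' \<in> mem \<sigma> \<Longrightarrow> start_mass t m' = (\<Sum>i\<in>mem \<sigma>. pmf (init \<sigma>) i * kpow (mem \<sigma>) wait_kernel t i m')"
proof (induction t arbitrary: m')
  case 0
  then show ?case using finite_mem by (simp add: start_mass_0)
next
  case (Suc t)
  have "start_mass (Suc t) m'
      = (\<Sum>m\<in>mem \<sigma>. (\<Sum>i\<in>mem \<sigma>. pmf (init \<sigma>) i * kpow (mem \<sigma>) wait_kernel t i m) * wait_kernel m m')"
    unfolding start_mass_Suc wait_kernel_def[symmetric] using Suc.IH by (intro sum.cong refl) auto
  also have "\<dots> = (\<Sum>i\<in>mem \<sigma>. pmf (init \<sigma>) i * kpow (mem \<sigma>) wait_kernel (Suc t) i m')"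
    by (simp add: sum_distrib_left sum_distrib_right mult.assoc) (rule sum.swap)
  finally show ?case .
qed

lemma gamble_pigeonhole:
  assumes "card (mem \<sigma>) \<le> n" "1 \<le> n"
  shows "gamble n \<le> real n * (\<Sum>k<n. gamble k)"
proof -
  interpret nonneg_kernel wait_kernel by (rule nonneg_kernel_wait)
  have start: "start_mass n j \<le> real n * (\<Sum>k<n. start_mass k j)" if j: "j \<in> mem \<sigma>" for j
  proof -
    have "start_mass n j \<le> (\<Sum>i\<in>mem \<sigma>. pmf (init \<sigma>) i * (real n * (\<Sum>k<n. kpow (mem \<sigma>) wait_kernel k i j)))"
      unfolding start_mass_kpow[OF j]
      by (intro sum_mono mult_left_mono kpow_pigeonhole[OF finite_mem assms] j wait_kernel_row_sum) auto
    also have "\<dots> = real n * (\<Sum>k<n. start_mass k j)"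
      unfolding start_mass_kpow[OF j]
      by (subst sum.swap) (simp add: sum_distrib_left mult.left_commute)
    finally show ?thesis .
  qed
  have "gamble n \<le> (\<Sum>m\<in>mem \<sigma>. real n * (\<Sum>k<n. start_mass k m) * p_gamble m)"
    unfolding gamble_def by (intro sum_mono mult_right_mono start) (simp_all add: p_gamble_def)
  also have "\<dots> = real n * (\<Sum>k<n. gamble k)"
    unfolding gamble_def by (subst sum.swap) (simp add: sum_distrib_left sum_distrib_right mult.assoc)
  finally show ?thesis .
qed

theorem small_memory_cost:
  assumes "card (mem \<sigma>) \<le> n" "1 \<le> n"
  shows "opt_cost n 0 + (1/2)^n / (32 * (real n + 1)) \<le> (\<Sum>t<n + 2. surv t)"
proof -
  interpret gamble_recursion n alive_start gamble surv by (rule gamble_recursion)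
  show ?thesis
    by (rule sum_survival_lower[OF gamble_nonneg gamble_le_alive_start gamble_pigeonhole[OF assms]])
qed

end

definition counting_strat :: "nat \<Rightarrow> (nat, nat, nat) strat" where
  "counting_strat n = \<lparr>mem = {..n}, init = return_pmf 0,
     act = (\<lambda>s m. if s = 0 \<and> m = n then return_pmf 1 else return_pmf 0),
     upd = (\<lambda>m s. return_pmf (min (Suc m) n))\<rparr>"

lemma valid_counting_strat: "valid_strat (timer_S n) timer_Act (timer_P n) (counting_strat n)"
  unfolding valid_strat_def counting_strat_def by (auto simp: enabled_timer)

lemma gambler_counting_strat: "gambler n (counting_strat n)"
  by unfold_locales (rule valid_counting_strat, simp add: counting_strat_def)

lemma counting_strat_simps:
  "mem (counting_strat n) = {..n}" "init (counting_strat n) = return_pmf 0"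
  "act (counting_strat n) 0 m = return_pmf (if m = n then 1 else 0)"
  "upd (counting_strat n) m s = return_pmf (min (Suc m) n)"
  by (simp_all add: counting_strat_def)

lemma (in gambler) counting_strat_start_mass:
  assumes "\<sigma> = counting_strat n" "t \<le> n" "m \<noteq> t"
  shows "start_mass t m = 0"
  using assms(2,3)
proof (induction t arbitrary: m)
  case 0
  have "init \<sigma> = return_pmf 0" using assms(1) counting_strat_simps by simp
  then show ?case using 0 by (simp add: start_mass_0)
next
  case (Suc t)
  have "upd \<sigma> m0 0 = return_pmf (min (Suc m0) n)" for m0 using assms(1) counting_strat_simps by simp
  then have "start_mass t m0 * (p_wait m0 / 2 * pmf (upd \<sigma> m0 0) m) = 0" for m0
    using Suc by (cases "m0 = t") auto
  then show ?case unfolding start_mass_Suc by (intro sum.neutral ballI)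
qed

lemma counting_strat_cost:
  "(\<Sum>t<n + 2. survive (timer_S n) (timer_P n) 0 {1} (counting_strat n) t) = opt_cost n 0"
proof -
  interpret gambler n "counting_strat n" by (rule gambler_counting_strat)
  interpret gamble_recursion n alive_start gamble surv by (rule gamble_recursion)
  have "pmf (act (counting_strat n) 0 m) 1 = of_bool (m = n)" for m
    by (simp add: counting_strat_simps)
  then have gamble: "gamble t = start_mass t n" for t
    unfolding gamble_def p_gamble_def counting_strat_simps by simp
  have "gamble t = 0" if "t < n" for t
    unfolding gamble using counting_strat_start_mass[of t n] that by simp
  moreover have "gamble n = alive_start n"
    unfolding gamble alive_start_def counting_strat_simps using counting_strat_start_mass[of n]
    by (simp add: sum.remove[of "{..n}" n])
  ultimately show ?thesis using sum_survival_eq_opt_cost unfolding surv_def by simp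
qed

theorem memory_hierarchy_strict:
  fixes n :: nat
  assumes "1 \<le> n"
  defines "\<pi> \<equiv> \<lambda>i. counting_strat n"
  shows "E_MHit (timer_S n) (timer_P n) 2 timer_iota (timer_T n) \<pi>
    < (INF \<pi>' \<in> {\<pi>' :: nat \<Rightarrow> (nat, nat, nat) strat.
            valid_profile (timer_S n) timer_Act (timer_P n) 2 \<pi>' \<and> mem_bounded n 2 \<pi>'}.
         E_MHit (timer_S n) (timer_P n) 2 timer_iota (timer_T n) \<pi>')"
proof -
  define \<delta> where "\<delta> = (1/2::real)^n / (32 * (real n + 1))"
  have valid: "valid_profile (timer_S n) timer_Act (timer_P n) 2 \<pi>"
    unfolding valid_profile_def \<pi>_def using valid_counting_strat by auto
  have "0 \<le> opt_cost n 0" unfolding opt_cost_def using power_le_one[of "1/2::real" n] by simp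
  moreover have "0 < \<delta>" unfolding \<delta>_def by simp
  moreover have "E_MHit (timer_S n) (timer_P n) 2 timer_iota (timer_T n) \<pi> = ennreal (opt_cost n 0)"
    unfolding E_MHit_timer[OF valid] unfolding \<pi>_def counting_strat_cost ..
  ultimately have "E_MHit (timer_S n) (timer_P n) 2 timer_iota (timer_T n) \<pi> < ennreal (opt_cost n 0 + \<delta>)"
    by (simp add: ennreal_less_iff)
  also have "\<dots> \<le> E_MHit (timer_S n) (timer_P n) 2 timer_iota (timer_T n) \<pi>'"
    if "valid_profile (timer_S n) timer_Act (timer_P n) 2 \<pi>'" "mem_bounded n 2 \<pi>'"
    for \<pi>' :: "nat \<Rightarrow> (nat, nat, nat) strat"
  proof -
    have "valid_strat (timer_S n) timer_Act (timer_P n) (\<pi>' 0)" "finite (mem (\<pi>' 0))"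
      and card: "card (mem (\<pi>' 0)) \<le> n"
      using that unfolding valid_profile_def mem_bounded_def by auto
    then interpret gambler n "\<pi>' 0" by unfold_locales
    show ?thesis
      unfolding E_MHit_timer[OF that(1)] \<delta>_def using small_memory_cost[OF card \<open>1 \<le> n\<close>]
      by (simp add: surv_def ennreal_leI)
  qed
  then have "ennreal (opt_cost n 0 + \<delta>) \<le> (INF \<pi>' \<in> {\<pi>' :: nat \<Rightarrow> (nat, nat, nat) strat.
            valid_profile (timer_S n) timer_Act (timer_P n) 2 \<pi>' \<and> mem_bounded n 2 \<pi>'}.
         E_MHit (timer_S n) (timer_P n) 2 timer_iota (timer_T n) \<pi>')"
    by (intro INF_greatest) auto
  finally show ?thesis .
qed

corollary memory_hierarchy:
  fixes n :: nat
  assumes "1 \<le> n"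
  shows "\<exists>(S :: nat set) (Act :: nat set) P iota T (\<pi> :: nat \<Rightarrow> (nat, nat, nat) strat).
    is_mssp S Act P 2 iota T \<and> valid_profile S Act P 2 \<pi> \<and> mem_bounded (n + 1) 2 \<pi>
    \<and> E_MHit S P 2 iota T \<pi> < (INF \<pi>' \<in> {\<pi>' :: nat \<Rightarrow> (nat, nat, nat) strat.
            valid_profile S Act P 2 \<pi>' \<and> mem_bounded n 2 \<pi>'}. E_MHit S P 2 iota T \<pi>')"
proof -
  have "valid_profile (timer_S n) timer_Act (timer_P n) 2 (\<lambda>i. counting_strat n)"
    "mem_bounded (n + 1) 2 (\<lambda>i. counting_strat n)"
    using valid_counting_strat by (auto simp: valid_profile_def mem_bounded_def counting_strat_def)
  with mssp_timer memory_hierarchy_strict[OF assms] show ?thesis by blast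
qed

section \<open>Imitating a strategy with a step counter\<close>

definition state_dist :: "'s set \<Rightarrow> ('s \<Rightarrow> 'a \<Rightarrow> 's \<Rightarrow> real) \<Rightarrow> 's \<Rightarrow> 's set
     \<Rightarrow> ('s, 'a, 'm) strat \<Rightarrow> nat \<Rightarrow> 's option pmf" where
  "state_dist S P \<iota> Tg \<sigma> t = map_pmf (map_option fst) (agent_dist S P \<iota> Tg \<sigma> t)"

definition state_act_dist :: "'s set \<Rightarrow> ('s \<Rightarrow> 'a \<Rightarrow> 's \<Rightarrow> real) \<Rightarrow> 's \<Rightarrow> 's set
     \<Rightarrow> ('s, 'a, 'm) strat \<Rightarrow> nat \<Rightarrow> ('s \<times> 'a) option pmf" where
  "state_act_dist S P \<iota> Tg \<sigma> t = bind_pmf (agent_dist S P \<iota> Tg \<sigma> t)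
     (\<lambda>x. case x of None \<Rightarrow> return_pmf None | Some (s, m) \<Rightarrow> map_pmf (\<lambda>a. Some (s, a)) (act \<sigma> s m))"

definition move :: "'s set \<Rightarrow> ('s \<Rightarrow> 'a \<Rightarrow> 's \<Rightarrow> real) \<Rightarrow> 's set \<Rightarrow> 's \<Rightarrow> 'a \<Rightarrow> 's option pmf" where
  "move S P Tg s a = map_pmf (\<lambda>s'. if s' \<in> Tg then None else Some s') (trans_pmf S P s a)"

definition move_opt :: "'s set \<Rightarrow> ('s \<Rightarrow> 'a \<Rightarrow> 's \<Rightarrow> real) \<Rightarrow> 's set \<Rightarrow> ('s \<times> 'a) option \<Rightarrow> 's option pmf" where
  "move_opt S P Tg z = (case z of None \<Rightarrow> return_pmf None | Some (s, a) \<Rightarrow> move S P Tg s a)"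

lemma state_dist_state_act_dist:
  "state_dist S P \<iota> Tg \<sigma> t = map_pmf (map_option fst) (state_act_dist S P \<iota> Tg \<sigma> t)"
  unfolding state_act_dist_def state_dist_def map_bind_pmf map_pmf_def[of _ "agent_dist S P \<iota> Tg \<sigma> t"]
  by (intro bind_pmf_cong refl) (auto split: option.splits simp: map_pmf_comp)

lemma map_pmf_map_option_fst_kill:
  "map_pmf (map_option fst) (map_pmf (\<lambda>m'. if s' \<in> Tg then None else Some (s', m')) q)
     = return_pmf (if s' \<in> Tg then None else Some s')"
  by (cases "s' \<in> Tg") (simp_all add: map_pmf_comp)

lemma state_dist_Suc:
  "state_dist S P \<iota> Tg \<sigma> (Suc t) = bind_pmf (state_act_dist S P \<iota> Tg \<sigma> t) (move_opt S P Tg)"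
  unfolding state_dist_def state_act_dist_def agent_dist_Suc_step map_bind_pmf bind_assoc_pmf
proof (intro bind_pmf_cong refl)
  fix x
  show "map_pmf (map_option fst) (agent_step S P Tg \<sigma> x) =
      bind_pmf (case x of None \<Rightarrow> return_pmf None | Some (s, m) \<Rightarrow> map_pmf (\<lambda>a. Some (s, a)) (act \<sigma> s m))
        (move_opt S P Tg)"
  proof (cases x)
    case (Some p)
    obtain s m where p: "p = (s, m)" by force
    have "map_pmf (map_option fst) (agent_step S P Tg \<sigma> (Some (s, m)))
        = bind_pmf (act \<sigma> s m) (\<lambda>a. bind_pmf (trans_pmf S P s a) (\<lambda>s'. return_pmf (if s' \<in> Tg then None else Some s')))"
      by (simp add: agent_step_def map_bind_pmf map_pmf_map_option_fst_kill)
    also have "\<dots> = bind_pmf (act \<sigma> s m) (move S P Tg s)"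
      unfolding move_def map_pmf_def ..
    finally show ?thesis using Some p by (simp add: bind_map_pmf move_opt_def)
  qed (simp add: bind_return_pmf move_opt_def)
qed

lemma pmf_state_dist_None: "pmf (state_dist S P \<iota> Tg \<sigma> t) None = pmf (agent_dist S P \<iota> Tg \<sigma> t) None"
  unfolding state_dist_def pmf_map
  by (subst measure_pmf_single[symmetric], rule arg_cong[where f="measure _"]) auto

lemma survive_state_dist: "survive S P \<iota> Tg \<sigma> t = 1 - pmf (state_dist S P \<iota> Tg \<sigma> t) None"
  unfolding survive_def pmf_state_dist_None ..

lemma alive_not_target:
  assumes "\<iota> \<notin> Tg"
  shows "Some (s, m) \<in> set_pmf (agent_dist S P \<iota> Tg \<sigma> t) \<Longrightarrow> s \<notin> Tg"
proof (induction t arbitrary: s m)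
  case 0
  then show ?case using assms by auto
next
  case (Suc t)
  then obtain x where "Some (s, m) \<in> set_pmf (agent_step S P Tg \<sigma> x)"
    unfolding agent_dist_Suc_step by auto
  then show ?case by (auto simp: agent_step_def split: option.splits if_splits)
qed

lemma set_state_act_dist:
  assumes mdp: "is_mdp S Act P" and v: "valid_strat S Act P \<sigma>" and \<iota>: "\<iota> \<in> S" "\<iota> \<notin> Tg"
    and z: "Some (s, a) \<in> set_pmf (state_act_dist S P \<iota> Tg \<sigma> t)"
  shows "s \<in> S" "s \<notin> Tg" "a \<in> enabled S Act P s"
proof -
  from z obtain m where x: "Some (s, m) \<in> set_pmf (agent_dist S P \<iota> Tg \<sigma> t)"
    and a: "a \<in> set_pmf (act \<sigma> s m)"
    unfolding state_act_dist_def by (auto split: option.splits)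
  have sm: "s \<in> S" "m \<in> mem \<sigma>" using set_pmf_agent_dist[OF mdp v \<iota>(1)] x by auto
  then show "s \<in> S" by simp
  show "s \<notin> Tg" using alive_not_target[OF \<iota>(2) x] .
  show "a \<in> enabled S Act P s" using v a sm unfolding valid_strat_def by blast
qed

text \<open>The action law of \<open>\<sigma>\<close> at time \<open>t\<close> conditioned on being alive in \<open>s\<close>; if \<open>s\<close> cannot be
  occupied at time \<open>t\<close>, the fallback action \<open>fb s\<close> is used instead.\<close>

definition cond_act :: "'s set \<Rightarrow> ('s \<Rightarrow> 'a \<Rightarrow> 's \<Rightarrow> real) \<Rightarrow> 's \<Rightarrow> 's set
     \<Rightarrow> ('s, 'a, 'm) strat \<Rightarrow> ('s \<Rightarrow> 'a) \<Rightarrow> nat \<Rightarrow> 's \<Rightarrow> 'a pmf" where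
  "cond_act S P \<iota> Tg \<sigma> fb t s =
     (if set_pmf (state_act_dist S P \<iota> Tg \<sigma> t) \<inter> {z. map_option fst z = Some s} \<noteq> {}
      then map_pmf (\<lambda>z. snd (the z)) (cond_pmf (state_act_dist S P \<iota> Tg \<sigma> t) {z. map_option fst z = Some s})
      else return_pmf (fb s))"

text \<open>The step counter saturates at \<open>N\<close>: until then the strategy reproduces the state
  distributions of \<open>\<sigma>\<close>, afterwards it plays the memoryless strategy \<open>fb\<close>.\<close>

definition counter_strat :: "'s set \<Rightarrow> ('s \<Rightarrow> 'a \<Rightarrow> 's \<Rightarrow> real) \<Rightarrow> 's \<Rightarrow> 's set
     \<Rightarrow> ('s, 'a, 'm) strat \<Rightarrow> nat \<Rightarrow> ('s \<Rightarrow> 'a) \<Rightarrow> ('s, 'a, nat) strat" where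
  "counter_strat S P \<iota> Tg \<sigma> N fb = \<lparr>mem = {..N}, init = return_pmf 0,
     act = (\<lambda>s m. if m < N then cond_act S P \<iota> Tg \<sigma> fb m s else return_pmf (fb s)),
     upd = (\<lambda>m s. return_pmf (min (Suc m) N))\<rparr>"

lemma state_act_dist_disintegrate:
  "state_act_dist S P \<iota> Tg \<sigma> t = bind_pmf (state_dist S P \<iota> Tg \<sigma> t)
     (\<lambda>y. case y of None \<Rightarrow> return_pmf None | Some s \<Rightarrow> map_pmf (\<lambda>a. Some (s, a)) (cond_act S P \<iota> Tg \<sigma> fb t s))"
proof -
  let ?\<xi> = "state_act_dist S P \<iota> Tg \<sigma> t"
  let ?f = "map_option fst :: ('a \<times> 'b) option \<Rightarrow> 'a option"
  have cancel: "bind_pmf (map_pmf ?f ?\<xi>) (\<lambda>y. cond_pmf ?\<xi> {z. ?f z = y}) = ?\<xi>"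
    by (rule bind_cond_pmf_cancel) (auto simp: vimage_def)
  have "cond_pmf ?\<xi> {z. ?f z = y} = (case y of None \<Rightarrow> return_pmf None
      | Some s \<Rightarrow> map_pmf (\<lambda>a. Some (s, a)) (cond_act S P \<iota> Tg \<sigma> fb t s))"
    if y: "y \<in> set_pmf (map_pmf ?f ?\<xi>)" for y
  proof -
    have ne: "set_pmf ?\<xi> \<inter> {z. ?f z = y} \<noteq> {}" using y by auto
    have "cond_pmf ?\<xi> {z. ?f z = y} = map_pmf (\<lambda>z. case y of None \<Rightarrow> None | Some s \<Rightarrow> Some (s, snd (the z)))
        (cond_pmf ?\<xi> {z. ?f z = y})"
      by (rule map_pmf_idI[symmetric]) (auto simp: set_cond_pmf[OF ne] split: option.splits)
    then show ?thesis
      using ne by (auto simp: cond_act_def map_pmf_comp split: option.splits)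
  qed
  then show ?thesis
    unfolding state_dist_state_act_dist by (subst cancel[symmetric], intro bind_pmf_cong refl) auto
qed

lemma act_counter_strat:
  "act (counter_strat S P \<iota> Tg \<sigma> N fb) s m = (if m < N then cond_act S P \<iota> Tg \<sigma> fb m s else return_pmf (fb s))"
  by (simp add: counter_strat_def)

lemma agent_step_counter_strat:
  "agent_step S P Tg (counter_strat S P \<iota> Tg \<sigma> N fb) (Some (s, m))
     = map_pmf (map_option (\<lambda>s'. (s', min (Suc m) N)))
         (bind_pmf (act (counter_strat S P \<iota> Tg \<sigma> N fb) s m) (move S P Tg s))"
proof -
  have upd: "upd (counter_strat S P \<iota> Tg \<sigma> N fb) m s' = return_pmf (min (Suc m) N)" for s'
    by (simp add: counter_strat_def)
  show ?thesis
    unfolding agent_step_def upd move_def map_bind_pmf map_pmf_comp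
    by (simp add: map_pmf_def upd bind_return_pmf) (intro bind_pmf_cong refl, simp)
qed

lemma agent_dist_counter_strat:
  assumes "t \<le> N"
  shows "agent_dist S P \<iota> Tg (counter_strat S P \<iota> Tg \<sigma> N fb) t
     = map_pmf (map_option (\<lambda>s. (s, t))) (state_dist S P \<iota> Tg \<sigma> t)"
  using assms
proof (induction t)
  case 0
  show ?case by (cases "\<iota> \<in> Tg") (simp_all add: counter_strat_def state_dist_def map_pmf_comp)
next
  case (Suc t)
  let ?H = "\<lambda>y. case y of None \<Rightarrow> return_pmf None
     | Some s \<Rightarrow> bind_pmf (cond_act S P \<iota> Tg \<sigma> fb t s) (move S P Tg s)"
  have step: "agent_step S P Tg (counter_strat S P \<iota> Tg \<sigma> N fb) (map_option (\<lambda>s. (s, t)) y)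
      = map_pmf (map_option (\<lambda>s. (s, Suc t))) (?H y)" for y
    using Suc.prems by (cases y) (simp_all add: agent_step_counter_strat act_counter_strat)
  have H: "bind_pmf (state_dist S P \<iota> Tg \<sigma> t) ?H = state_dist S P \<iota> Tg \<sigma> (Suc t)"
    unfolding state_dist_Suc state_act_dist_disintegrate[where fb=fb] bind_assoc_pmf
    by (intro bind_pmf_cong refl) (auto split: option.splits simp: bind_return_pmf bind_map_pmf move_opt_def)
  show ?case
    unfolding agent_dist_Suc_step Suc.IH[OF Suc_leD[OF Suc.prems]] bind_map_pmf step H[symmetric] map_bind_pmf ..
qed

lemma survive_counter_strat:
  assumes "t \<le> N"
  shows "survive S P \<iota> Tg (counter_strat S P \<iota> Tg \<sigma> N fb) t = survive S P \<iota> Tg \<sigma> t"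
  unfolding survive_state_dist state_dist_def[of _ _ _ _ "counter_strat S P \<iota> Tg \<sigma> N fb"]
    agent_dist_counter_strat[OF assms]
  by (simp add: map_pmf_comp option.map_comp comp_def option.map_ident)

lemma valid_counter_strat:
  assumes mdp: "is_mdp S Act P" and v: "valid_strat S Act P \<sigma>" and \<iota>: "\<iota> \<in> S" "\<iota> \<notin> Tg"
    and fb: "\<And>s. s \<in> S \<Longrightarrow> fb s \<in> enabled S Act P s"
  shows "valid_strat S Act P (counter_strat S P \<iota> Tg \<sigma> N fb)"
proof -
  have "set_pmf (cond_act S P \<iota> Tg \<sigma> fb t s) \<subseteq> enabled S Act P s" if s: "s \<in> S" for s t
  proof (cases "set_pmf (state_act_dist S P \<iota> Tg \<sigma> t) \<inter> {z. map_option fst z = Some s} \<noteq> {}")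
    case True
    show ?thesis
    proof
      fix a assume "a \<in> set_pmf (cond_act S P \<iota> Tg \<sigma> fb t s)"
      then obtain z where "z \<in> set_pmf (state_act_dist S P \<iota> Tg \<sigma> t)" "map_option fst z = Some s" "a = snd (the z)"
        using True by (auto simp: cond_act_def set_cond_pmf)
      then show "a \<in> enabled S Act P s" using set_state_act_dist[OF mdp v \<iota>] by (cases z) auto
    qed
  qed (use fb[OF s] in \<open>simp add: cond_act_def\<close>)
  then show ?thesis using fb unfolding valid_strat_def by (auto simp: counter_strat_def)
qed

section \<open>The almost-sure region and an attractor strategy\<close>

lemma sum_weighted_le_bound:
  fixes p h :: "'s \<Rightarrow> real"
  assumes "finite S" "s0 \<in> S" "(\<Sum>s\<in>S. p s) = 1" "\<And>s. s \<in> S \<Longrightarrow> 0 \<le> p s"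
    "\<And>s. h s \<le> G" "c \<le> p s0"
  shows "(\<Sum>s\<in>S. p s * h s) \<le> G - c * (G - h s0)"
proof -
  have "(\<Sum>s\<in>S. p s * h s) = p s0 * h s0 + (\<Sum>s\<in>S - {s0}. p s * h s)"
    using assms(1,2) by (simp add: sum.remove)
  also have "(\<Sum>s\<in>S - {s0}. p s * h s) \<le> (\<Sum>s\<in>S - {s0}. p s * G)"
    using assms(4,5) by (intro sum_mono mult_left_mono) auto
  also have "\<dots> = (1 - p s0) * G"
    using assms(1-3) by (simp add: sum_distrib_right[symmetric] sum_diff1)
  finally have "(\<Sum>s\<in>S. p s * h s) \<le> G - p s0 * (G - h s0)" by (simp add: algebra_simps)
  also have "\<dots> \<le> G - c * (G - h s0)"
    using assms(5,6) by (intro diff_left_mono mult_right_mono) auto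
  finally show ?thesis .
qed

locale mdp_target =
  fixes S :: "'s set" and Act :: "'a set" and P :: "'s \<Rightarrow> 'a \<Rightarrow> 's \<Rightarrow> real" and T :: "'s set"
  assumes mdp: "is_mdp S Act P"
begin

lemma finite_S: "finite S" and finite_Act: "finite Act" using mdp unfolding is_mdp_def by auto

lemma P_nonneg: "s \<in> S \<Longrightarrow> a \<in> Act \<Longrightarrow> s' \<in> S \<Longrightarrow> 0 \<le> P s a s'"
  using mdp unfolding is_mdp_def by auto

lemma enabled_in_Act: "a \<in> enabled S Act P s \<Longrightarrow> a \<in> Act" unfolding enabled_def by auto
lemma sum_P_enabled: "a \<in> enabled S Act P s \<Longrightarrow> (\<Sum>s'\<in>S. P s a s') = 1" unfolding enabled_def by auto

definition min_prob :: real where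
  "min_prob = Min (insert 1 {P s a s' | s a s'. s \<in> S \<and> a \<in> Act \<and> s' \<in> S \<and> 0 < P s a s'})"

lemma finite_pos_probs: "finite {P s a s' | s a s'. s \<in> S \<and> a \<in> Act \<and> s' \<in> S \<and> 0 < P s a s'}"
proof -
  have "{P s a s' | s a s'. s \<in> S \<and> a \<in> Act \<and> s' \<in> S \<and> 0 < P s a s'}
      \<subseteq> (\<lambda>(s, a, s'). P s a s') ` (S \<times> Act \<times> S)"
    by force
  then show ?thesis by (rule finite_subset) (simp add: finite_S finite_Act)
qed

lemma min_prob_pos: "0 < min_prob"
  unfolding min_prob_def using finite_pos_probs by (subst Min_gr_iff) auto

lemma min_prob_le_1: "min_prob \<le> 1"
  unfolding min_prob_def using finite_pos_probs by simp

lemma min_prob_le: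
  assumes "s \<in> S" "a \<in> Act" "s' \<in> S" "P s a s' \<noteq> 0" shows "min_prob \<le> P s a s'"
proof -
  have "0 < P s a s'" using assms P_nonneg[of s a s'] by simp
  then show ?thesis unfolding min_prob_def using assms finite_pos_probs by (intro Min_le) auto
qed

definition safe_act :: "'s set \<Rightarrow> 's \<Rightarrow> 'a \<Rightarrow> bool" where
  "safe_act X s a \<longleftrightarrow> a \<in> enabled S Act P s \<and> (\<forall>s'\<in>S. P s a s' \<noteq> 0 \<longrightarrow> s' \<in> X \<union> T)"

inductive reach_safely :: "'s set \<Rightarrow> 's \<Rightarrow> bool" for X where
  target: "s \<in> X \<Longrightarrow> safe_act X s a \<Longrightarrow> s' \<in> S \<Longrightarrow> P s a s' \<noteq> 0 \<Longrightarrow> s' \<in> T \<Longrightarrow> reach_safely X s"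
| step: "s \<in> X \<Longrightarrow> safe_act X s a \<Longrightarrow> s' \<in> S \<Longrightarrow> P s a s' \<noteq> 0 \<Longrightarrow> reach_safely X s' \<Longrightarrow> reach_safely X s"

lemma reach_safely_in: "reach_safely X s \<Longrightarrow> s \<in> X"
  by (induction rule: reach_safely.induct) auto

fun safe_region :: "nat \<Rightarrow> 's set" where
  "safe_region 0 = S - T"
| "safe_region (Suc k) = {s. reach_safely (safe_region k) s}"

lemma safe_region_Suc_subset: "safe_region (Suc k) \<subseteq> safe_region k"
  using reach_safely_in by auto

lemma safe_region_antimono: "j \<le> k \<Longrightarrow> safe_region k \<subseteq> safe_region j"
proof (induction k rule: dec_induct)
  case base then show ?case by simp
next
  case (step k) then show ?case using safe_region_Suc_subset[of k] by auto
qed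

lemma safe_region_subset: "safe_region k \<subseteq> S - T"
  using safe_region_antimono[of 0 k] by simp

lemma finite_safe_region: "finite (safe_region k)"
  using safe_region_subset finite_S by (meson finite_Diff finite_subset)

lemma safe_region_stable:
  assumes e: "safe_region (Suc k) = safe_region k" and kj: "k \<le> j" shows "safe_region j = safe_region k"
  using kj
proof (induction j rule: dec_induct)
  case base then show ?case by simp
next
  case (step j)
  have "safe_region (Suc j) = {s. reach_safely (safe_region j) s}" by simp
  also have "\<dots> = {s. reach_safely (safe_region k) s}" using step.IH by simp
  also have "\<dots> = safe_region (Suc k)" by simp
  also have "\<dots> = safe_region k" by (rule e)
  finally show ?case .
qed

lemma safe_region_card: "(\<exists>j\<le>k. safe_region (Suc j) = safe_region j) \<or> card (safe_region k) + k \<le> card S"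
proof (induction k)
  case 0
  have "card (safe_region 0) \<le> card S" using finite_S by (intro card_mono) auto
  then show ?case by simp
next
  case (Suc k)
  show ?case
  proof (cases "\<exists>j\<le>k. safe_region (Suc j) = safe_region j")
    case True then show ?thesis by (meson le_SucI)
  next
    case False
    with Suc.IH have c: "card (safe_region k) + k \<le> card S" by blast
    have "safe_region (Suc k) \<noteq> safe_region k" using False by auto
    then have "safe_region (Suc k) \<subset> safe_region k" using safe_region_Suc_subset by auto
    moreover have "finite (safe_region k)" by (rule finite_safe_region)
    ultimately have "card (safe_region (Suc k)) < card (safe_region k)" by (rule psubset_card_mono[rotated])
    then show ?thesis using c by simp
  qed
qed

text \<open>The decreasing sequence \<open>safe_region\<close> is stationary from \<open>card S\<close> on; its limit is the
  set of states from which \<open>T\<close> can be reached almost surely.\<close>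

definition as_region :: "'s set" where "as_region = safe_region (card S)"

lemma as_region_fixpoint: "safe_region (Suc (card S)) = as_region"
proof (cases "\<exists>j\<le>card S. safe_region (Suc j) = safe_region j")
  case True
  then obtain j where j: "j \<le> card S" "safe_region (Suc j) = safe_region j" by auto
  then show ?thesis unfolding as_region_def using safe_region_stable[OF j(2)] j(1) by (metis le_SucI)
next
  case False
  then have "card (safe_region (card S)) + card S \<le> card S" using safe_region_card[of "card S"] by blast
  then have "card (safe_region (card S)) = 0" by simp
  moreover have "finite (safe_region (card S))" by (rule finite_safe_region)
  ultimately have "safe_region (card S) = {}" by simp
  then show ?thesis unfolding as_region_def using safe_region_Suc_subset[of "card S"] by auto
qed

lemma as_region_reach_safely: "s \<in> as_region \<Longrightarrow> reach_safely as_region s"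
  using as_region_fixpoint by (metis safe_region.simps(2) as_region_def mem_Collect_eq)

lemma as_region_subset: "as_region \<subseteq> S - T" unfolding as_region_def by (rule safe_region_subset)

lemma as_region_subset_safe_region: "k \<le> card S \<Longrightarrow> as_region \<subseteq> safe_region k"
  unfolding as_region_def by (rule safe_region_antimono)

definition escape_level :: "'s \<Rightarrow> nat" where "escape_level s = (LEAST k. s \<notin> safe_region (Suc k))"

definition escape_pot :: "'s \<Rightarrow> real" where
  "escape_pot s = (if s \<in> S - T - as_region then min_prob ^ escape_level s else 0)"

lemma escape_level_props:
  assumes s: "s \<in> S - T - as_region"
  shows "s \<notin> safe_region (Suc (escape_level s))" "s \<in> safe_region (escape_level s)" "escape_level s < card S"
proof -
  have "card S \<noteq> 0" using s finite_S by auto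
  then obtain c where c: "card S = Suc c" by (cases "card S") auto
  have ex: "s \<notin> safe_region (Suc c)" using s c unfolding as_region_def by simp
  show 1: "s \<notin> safe_region (Suc (escape_level s))" unfolding escape_level_def by (rule LeastI[of _ c]) (rule ex)
  have "escape_level s \<le> c" unfolding escape_level_def by (rule Least_le) (rule ex)
  then show "escape_level s < card S" using c by simp
  show "s \<in> safe_region (escape_level s)"
  proof (cases "escape_level s")
    case 0 then show ?thesis using s by simp
  next
    case (Suc j)
    then have "j < escape_level s" by simp
    then have "\<not> (s \<notin> safe_region (Suc j))" unfolding escape_level_def by (rule not_less_Least)
    then show ?thesis using Suc by simp
  qed
qed

lemma escape_level_eqI:
  assumes "s \<in> safe_region k" "s \<notin> safe_region (Suc k)" shows "escape_level s = k"
  unfolding escape_level_def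
proof (rule Least_equality)
  show "s \<notin> safe_region (Suc k)" by (rule assms(2))
  fix j assume j: "s \<notin> safe_region (Suc j)"
  show "k \<le> j"
  proof (rule ccontr)
    assume "\<not> k \<le> j"
    then have "Suc j \<le> k" by simp
    then have "safe_region k \<subseteq> safe_region (Suc j)" by (rule safe_region_antimono)
    then show False using assms(1) j by auto
  qed
qed

lemma escape_pot_nonneg: "0 \<le> escape_pot s" unfolding escape_pot_def using min_prob_pos by simp
lemma escape_pot_le_1: "escape_pot s \<le> 1" unfolding escape_pot_def using min_prob_pos min_prob_le_1 by (simp add: power_le_one)
lemma escape_pot_pos: "s \<in> S - T - as_region \<Longrightarrow> 0 < escape_pot s" unfolding escape_pot_def using min_prob_pos by simp

lemma escape_pot_step_safe:
  assumes s: "s \<in> S - T - as_region" and a: "a \<in> enabled S Act P s"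
    and safe: "safe_act (safe_region (escape_level s)) s a"
  shows "escape_pot s = (\<Sum>s'\<in>S. P s a s' * escape_pot s')"
proof -
  define k where "k = escape_level s"
  note lp = escape_level_props[OF s, folded k_def]
  have "escape_pot s' = min_prob ^ k" if s': "s' \<in> S" "P s a s' \<noteq> 0" for s'
  proof -
    have "s' \<in> safe_region k \<union> T" using safe s' unfolding safe_act_def k_def by auto
    moreover have "s' \<notin> T" "s' \<notin> safe_region (Suc k)"
      using reach_safely.target[OF lp(2) safe[folded k_def] s'] reach_safely.step[OF lp(2) safe[folded k_def] s'] lp(1)
      by auto
    moreover have "as_region \<subseteq> safe_region (Suc k)" using lp(3) by (intro as_region_subset_safe_region) simp
    ultimately have "s' \<in> S - T - as_region" "escape_level s' = k"
      using s' escape_level_eqI by auto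
    then show ?thesis unfolding escape_pot_def by simp
  qed
  then have "(\<Sum>s'\<in>S. P s a s' * escape_pot s') = (\<Sum>s'\<in>S. P s a s' * min_prob ^ k)"
    by (intro sum.cong refl) (metis mult_zero_left)
  also have "\<dots> = min_prob ^ k" using sum_P_enabled[OF a] by (simp add: sum_distrib_right[symmetric])
  finally show ?thesis using s unfolding escape_pot_def k_def by simp
qed

lemma escape_pot_step_unsafe:
  assumes s: "s \<in> S - T - as_region" and a: "a \<in> enabled S Act P s"
    and unsafe: "\<not> safe_act (safe_region (escape_level s)) s a"
  shows "escape_pot s \<le> (\<Sum>s'\<in>S. P s a s' * escape_pot s')"
proof -
  define k where "k = escape_level s"
  note lp = escape_level_props[OF s, folded k_def]
  have sS: "s \<in> S" and aA: "a \<in> Act" using s enabled_in_Act[OF a] by auto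
  obtain s' where s': "s' \<in> S" "P s a s' \<noteq> 0" "s' \<notin> safe_region k \<union> T"
    using a unsafe unfolding safe_act_def k_def by auto
  then obtain j where j: "k = Suc j" by (cases k) auto
  have "s' \<notin> as_region" using s' as_region_subset_safe_region[of k] lp(3) by auto
  then have s'_out: "s' \<in> S - T - as_region" using s' by auto
  have "escape_level s' \<le> j" unfolding escape_level_def using s' j by (intro Least_le) auto
  then have "min_prob ^ j \<le> escape_pot s'"
    using s'_out min_prob_pos min_prob_le_1 unfolding escape_pot_def by (simp add: power_decreasing)
  have "escape_pot s = min_prob * min_prob ^ j" using s j unfolding escape_pot_def k_def by simp
  also have "\<dots> \<le> P s a s' * escape_pot s'"
    using min_prob_le[OF sS aA s'(1,2)] \<open>min_prob ^ j \<le> escape_pot s'\<close> min_prob_pos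
    by (intro mult_mono) auto
  also have "\<dots> \<le> (\<Sum>s'\<in>S. P s a s' * escape_pot s')"
    using finite_S s'(1) P_nonneg[OF sS aA] escape_pot_nonneg by (intro member_le_sum mult_nonneg_nonneg) auto
  finally show ?thesis .
qed

text \<open>Outside the almost-sure region the expected escape potential never decreases: an action
  that is safe for the current level keeps all successors on that level, any other action
  drops to a lower level, whose potential is at least \<open>1/min_prob\<close> times larger, with
  probability at least \<open>min_prob\<close>.\<close>

lemma escape_pot_step:
  assumes "s \<in> S - T - as_region" "a \<in> enabled S Act P s"
  shows "escape_pot s \<le> (\<Sum>s'\<in>S. P s a s' * escape_pot s')"
  using escape_pot_step_safe[OF assms] escape_pot_step_unsafe[OF assms] by fastforce

fun attractor :: "nat \<Rightarrow> 's set" where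
  "attractor 0 = T"
| "attractor (Suc k) = attractor k \<union> {s \<in> as_region. \<exists>a. safe_act as_region s a \<and> (\<exists>s'\<in>attractor k. s' \<in> S \<and> P s a s' \<noteq> 0)}"

lemma attractor_subset: "attractor k \<subseteq> as_region \<union> T"
  by (induction k) auto

lemma as_region_attractor: "reach_safely as_region s \<Longrightarrow> \<exists>k. s \<in> attractor k"
proof (induction rule: reach_safely.induct)
  case (target s a s')
  then have "s \<in> attractor (Suc 0)" by auto
  then show ?case by blast
next
  case (step s a s')
  then obtain k where "s' \<in> attractor k" by auto
  then have "s \<in> attractor (Suc k)" using step by auto
  then show ?case by blast
qed

definition rank :: "'s \<Rightarrow> nat" where "rank s = (LEAST k. s \<in> attractor k)"

lemma rank_decrease:
  assumes s: "s \<in> as_region"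
  shows "\<exists>a. safe_act as_region s a \<and> (\<exists>s'\<in>S. P s a s' \<noteq> 0 \<and> s' \<in> as_region \<union> T \<and> rank s' < rank s)"
proof -
  have ex: "\<exists>k. s \<in> attractor k" using as_region_attractor[OF as_region_reach_safely[OF s]] .
  have inL: "s \<in> attractor (rank s)" unfolding rank_def using ex by (rule LeastI_ex)
  have "rank s \<noteq> 0" using inL s as_region_subset by (metis Diff_iff attractor.simps(1) subsetD)
  then obtain j where j: "rank s = Suc j" by (cases "rank s") auto
  have "\<not> s \<in> attractor j" unfolding rank_def by (rule not_less_Least) (use j in \<open>simp add: rank_def\<close>)
  then obtain a s' where a: "safe_act as_region s a" "s' \<in> attractor j" "s' \<in> S" "P s a s' \<noteq> 0"
    using inL j by auto
  have "rank s' \<le> j" unfolding rank_def using a(2) by (rule Least_le)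
  then have "rank s' < rank s" using j by simp
  moreover have "s' \<in> as_region \<union> T" using a(2) attractor_subset by auto
  ultimately show ?thesis using a by blast
qed

definition attractor_act :: "'s \<Rightarrow> 'a" where
  "attractor_act s = (if s \<in> as_region
     then SOME a. safe_act as_region s a \<and> (\<exists>s'\<in>S. P s a s' \<noteq> 0 \<and> s' \<in> as_region \<union> T \<and> rank s' < rank s)
     else SOME a. a \<in> enabled S Act P s)"

lemma attractor_act_as_region:
  assumes "s \<in> as_region"
  shows "safe_act as_region s (attractor_act s) \<and> (\<exists>s'\<in>S. P s (attractor_act s) s' \<noteq> 0 \<and> s' \<in> as_region \<union> T \<and> rank s' < rank s)"
  using someI_ex[OF rank_decrease[OF assms]] assms unfolding attractor_act_def by simp

lemma attractor_act_enabled: "s \<in> S \<Longrightarrow> attractor_act s \<in> enabled S Act P s"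
proof (cases "s \<in> as_region")
  case True then show ?thesis using attractor_act_as_region unfolding safe_act_def by blast
next
  case False
  assume "s \<in> S"
  then have "enabled S Act P s \<noteq> {}" using mdp unfolding is_mdp_def by auto
  then show ?thesis using False unfolding attractor_act_def by (simp add: some_in_eq)
qed

definition max_rank :: nat where "max_rank = Max (insert 0 (rank ` as_region))"

lemma rank_le_max_rank: "s \<in> as_region \<Longrightarrow> rank s \<le> max_rank"
  unfolding max_rank_def as_region_def using finite_safe_region by simp

text \<open>\<open>hit_bound - slack k\<close> will bound the expected time to reach \<open>T\<close> from rank \<open>k\<close>. The slack
  obeys \<open>slack (Suc k) = min_prob * slack k - 1\<close>, and \<open>hit_bound\<close> is chosen so large that it
  stays nonnegative up to \<open>max_rank\<close>.\<close>

definition hit_bound :: real where "hit_bound = real max_rank / min_prob ^ max_rank"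
definition slack :: "nat \<Rightarrow> real" where "slack k = min_prob ^ k * hit_bound - (\<Sum>i<k. min_prob ^ i)"

lemma hit_bound_nonneg: "0 \<le> hit_bound" unfolding hit_bound_def using min_prob_pos by simp

lemma slack_Suc: "slack (Suc k) = min_prob * slack k - 1"
proof -
  have e: "(\<Sum>i<Suc k. min_prob ^ i) = 1 + min_prob * (\<Sum>i<k. min_prob ^ i)"
    by (subst sum.lessThan_Suc_shift) (simp add: sum_distrib_left)
  show ?thesis unfolding slack_def e by (simp add: algebra_simps)
qed

lemma slack_nonneg: "k \<le> max_rank \<Longrightarrow> 0 \<le> slack k"
proof -
  assume k: "k \<le> max_rank"
  have "(\<Sum>i<k. min_prob ^ i) \<le> (\<Sum>i<k. 1)"
    using min_prob_pos min_prob_le_1 by (intro sum_mono) (auto simp: power_le_one)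
  then have s: "(\<Sum>i<k. min_prob ^ i) \<le> real k" by simp
  have "min_prob ^ max_rank \<le> min_prob ^ k" using k min_prob_pos min_prob_le_1 by (intro power_decreasing) auto
  then have "min_prob ^ max_rank * hit_bound \<le> min_prob ^ k * hit_bound" using hit_bound_nonneg by (rule mult_right_mono)
  moreover have "min_prob ^ max_rank * hit_bound = real max_rank" unfolding hit_bound_def using min_prob_pos by simp
  ultimately show ?thesis unfolding slack_def using s k by linarith
qed

lemma slack_le_hit_bound: "slack k \<le> hit_bound"
proof -
  have "min_prob ^ k * hit_bound \<le> 1 * hit_bound" using min_prob_pos min_prob_le_1 hit_bound_nonneg
    by (intro mult_right_mono) (auto simp: power_le_one)
  moreover have "0 \<le> (\<Sum>i<k. min_prob ^ i)" using min_prob_pos by (intro sum_nonneg) auto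
  ultimately show ?thesis unfolding slack_def by simp
qed

lemma slack_antimono: "j \<le> k \<Longrightarrow> k \<le> max_rank \<Longrightarrow> slack k \<le> slack j"
proof (induction k rule: dec_induct)
  case base then show ?case by simp
next
  case (step k)
  have "0 \<le> slack k" using step by (intro slack_nonneg) simp
  then have "min_prob * slack k \<le> slack k" using min_prob_le_1 min_prob_pos by (intro mult_left_le_one_le) auto
  then have "slack (Suc k) \<le> slack k" unfolding slack_Suc by simp
  then show ?case using step by simp
qed

definition hit_pot :: "'s \<Rightarrow> real" where "hit_pot s = (if s \<in> as_region then hit_bound - slack (rank s) else 0)"

lemma hit_pot_nonneg: "0 \<le> hit_pot s" unfolding hit_pot_def using slack_le_hit_bound by simp
lemma hit_pot_le_hit_bound: "hit_pot s \<le> hit_bound"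
  unfolding hit_pot_def using slack_nonneg rank_le_max_rank hit_bound_nonneg by auto

text \<open>The rank drops with probability at least \<open>min_prob\<close> under \<open>attractor_act\<close>.\<close>

lemma hit_pot_drift:
  assumes s: "s \<in> as_region"
  shows "1 + (\<Sum>s'\<in>S. P s (attractor_act s) s' * (if s' \<in> T then 0 else hit_pot s')) \<le> hit_pot s"
proof -
  define a where "a = attractor_act s"
  define h where "h s' = (if s' \<in> T then 0 else hit_pot s')" for s'
  define k where "k = rank s"
  obtain s0 where s0: "s0 \<in> S" "P s a s0 \<noteq> 0" "s0 \<in> as_region \<union> T" "rank s0 < k"
    using attractor_act_as_region[OF s] unfolding a_def k_def by auto
  have sS: "s \<in> S" using s as_region_subset by auto
  have aE: "a \<in> enabled S Act P s" using attractor_act_enabled[OF sS] unfolding a_def .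
  have aA: "a \<in> Act" using aE by (rule enabled_in_Act)
  have kL: "k \<le> max_rank" unfolding k_def using rank_le_max_rank[OF s] .
  have hG: "h s' \<le> hit_bound" for s' unfolding h_def using hit_pot_le_hit_bound hit_bound_nonneg by simp
  have h0: "h s0 \<le> hit_bound - slack (k - 1)"
  proof (cases "s0 \<in> T")
    case True then show ?thesis unfolding h_def using slack_le_hit_bound by simp
  next
    case False
    then have "s0 \<in> as_region" using s0 by auto
    moreover have "slack (k - 1) \<le> slack (rank s0)" using s0(4) kL by (intro slack_antimono) auto
    ultimately show ?thesis unfolding h_def hit_pot_def using False by simp
  qed
  have "(\<Sum>s'\<in>S. P s a s' * h s') \<le> hit_bound - min_prob * (hit_bound - h s0)"
    using finite_S s0(1) sum_P_enabled[OF aE] P_nonneg[OF sS aA] hG min_prob_le[OF sS aA s0(1,2)]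
    by (rule sum_weighted_le_bound)
  also have "\<dots> \<le> hit_bound - min_prob * slack (k - 1)"
    using h0 min_prob_pos by (intro diff_left_mono mult_left_mono) auto
  also have "\<dots> = hit_bound - slack k - 1"
    using s0(4) slack_Suc[of "k - 1"] by simp
  also have "hit_bound - slack k = hit_pot s" unfolding hit_pot_def k_def using s by simp
  finally show ?thesis unfolding a_def h_def by simp
qed

end

definition alive_pot :: "('s \<Rightarrow> real) \<Rightarrow> 's option \<Rightarrow> ennreal" where
  "alive_pot h y = (case y of None \<Rightarrow> 0 | Some s \<Rightarrow> ennreal (h s))"

context mdp_target
begin

lemma nn_integral_move:
  assumes s: "s \<in> S" and a: "a \<in> enabled S Act P s" and h: "\<And>s'. 0 \<le> h s'"
  shows "(\<integral>\<^sup>+y. alive_pot h y \<partial>move S P T s a) = ennreal (\<Sum>s'\<in>S. P s a s' * (if s' \<in> T then 0 else h s'))"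
proof -
  have "(\<integral>\<^sup>+y. alive_pot h y \<partial>move S P T s a) =
      (\<integral>\<^sup>+s'. alive_pot h (if s' \<in> T then None else Some s') \<partial>trans_pmf S P s a)"
    unfolding move_def by simp
  also have "\<dots> = (\<Sum>s'\<in>S. alive_pot h (if s' \<in> T then None else Some s') * ennreal (pmf (trans_pmf S P s a) s'))"
    using set_pmf_trans_pmf[OF mdp s a] finite_S by (intro nn_integral_measure_pmf_support) auto
  also have "\<dots> = (\<Sum>s'\<in>S. ennreal (P s a s' * (if s' \<in> T then 0 else h s')))"
  proof (intro sum.cong refl)
    fix s' assume s': "s' \<in> S"
    have "0 \<le> P s a s'" using P_nonneg[OF s enabled_in_Act[OF a] s'] .
    then show "alive_pot h (if s' \<in> T then None else Some s') * ennreal (pmf (trans_pmf S P s a) s') =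
        ennreal (P s a s' * (if s' \<in> T then 0 else h s'))"
      using s' h[of s'] by (simp add: pmf_trans_pmf[OF mdp s a] alive_pot_def ennreal_mult' mult.commute)
  qed
  also have "\<dots> = ennreal (\<Sum>s'\<in>S. P s a s' * (if s' \<in> T then 0 else h s'))"
    using P_nonneg[OF s enabled_in_Act[OF a]] h by (intro sum_ennreal) auto
  finally show ?thesis .
qed

end

locale mdp_agent = mdp_target S Act P T for S :: "'s set" and Act :: "'a set" and P T +
  fixes \<iota> :: 's
  assumes iota_S: "\<iota> \<in> S" and iota_not_T: "\<iota> \<notin> T"
begin

definition exp_escape_pot :: "('s, 'a, 'm) strat \<Rightarrow> nat \<Rightarrow> ennreal" where
  "exp_escape_pot \<sigma> t = (\<integral>\<^sup>+y. alive_pot escape_pot y \<partial>state_dist S P \<iota> T \<sigma> t)"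

lemma exp_escape_pot_Suc:
  assumes v: "valid_strat S Act P \<sigma>"
  shows "exp_escape_pot \<sigma> t \<le> exp_escape_pot \<sigma> (Suc t)"
proof -
  have "exp_escape_pot \<sigma> t = (\<integral>\<^sup>+z. alive_pot escape_pot (map_option fst z) \<partial>state_act_dist S P \<iota> T \<sigma> t)"
    unfolding exp_escape_pot_def state_dist_state_act_dist by simp
  also have "\<dots> \<le> (\<integral>\<^sup>+z. (\<integral>\<^sup>+y. alive_pot escape_pot y \<partial>move_opt S P T z) \<partial>state_act_dist S P \<iota> T \<sigma> t)"
  proof (intro nn_integral_mono_AE, unfold AE_measure_pmf_iff, intro ballI)
    fix z assume z: "z \<in> set_pmf (state_act_dist S P \<iota> T \<sigma> t)"
    show "alive_pot escape_pot (map_option fst z) \<le> (\<integral>\<^sup>+y. alive_pot escape_pot y \<partial>move_opt S P T z)"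
    proof (cases z)
      case None then show ?thesis by (simp add: alive_pot_def)
    next
      case (Some p)
      obtain s a where p: "p = (s, a)" by force
      have sa: "s \<in> S" "s \<notin> T" "a \<in> enabled S Act P s" using set_state_act_dist[OF mdp v iota_S iota_not_T] z Some p by auto
      have "(\<integral>\<^sup>+y. alive_pot escape_pot y \<partial>move_opt S P T z) = ennreal (\<Sum>s'\<in>S. P s a s' * (if s' \<in> T then 0 else escape_pot s'))"
        using Some p nn_integral_move[OF sa(1) sa(3) escape_pot_nonneg] by (simp add: move_opt_def)
      also have "(\<Sum>s'\<in>S. P s a s' * (if s' \<in> T then 0 else escape_pot s')) = (\<Sum>s'\<in>S. P s a s' * escape_pot s')"
        by (intro sum.cong refl) (simp add: escape_pot_def)
      finally have e: "(\<integral>\<^sup>+y. alive_pot escape_pot y \<partial>move_opt S P T z) = ennreal (\<Sum>s'\<in>S. P s a s' * escape_pot s')" .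
      show ?thesis
      proof (cases "s \<in> as_region")
        case True
        then have "escape_pot s = 0" unfolding escape_pot_def by simp
        then show ?thesis using Some p by (simp add: alive_pot_def)
      next
        case False
        then have "escape_pot s \<le> (\<Sum>s'\<in>S. P s a s' * escape_pot s')" using escape_pot_step[OF _ sa(3)] sa by auto
        then show ?thesis using Some p e by (simp add: alive_pot_def ennreal_leI)
      qed
    qed
  qed
  also have "\<dots> = exp_escape_pot \<sigma> (Suc t)"
    unfolding exp_escape_pot_def state_dist_Suc by simp
  finally show ?thesis .
qed

lemma exp_escape_pot_mono:
  assumes v: "valid_strat S Act P \<sigma>" and "t \<le> t'"
  shows "exp_escape_pot \<sigma> t \<le> exp_escape_pot \<sigma> t'"
  using assms(2)
proof (induction t' rule: dec_induct)
  case base then show ?case by simp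
next
  case (step n) then show ?case using exp_escape_pot_Suc[OF v, of n] by simp
qed

lemma nn_integral_alive:
  "(\<integral>\<^sup>+y. indicator (-{None}) y \<partial>state_dist S P \<iota> T \<sigma> t) = ennreal (survive S P \<iota> T \<sigma> t)"
proof -
  have "(\<integral>\<^sup>+y. indicator (-{None}) y \<partial>state_dist S P \<iota> T \<sigma> t) = emeasure (state_dist S P \<iota> T \<sigma> t) (-{None})"
    by (simp add: nn_integral_indicator)
  also have "\<dots> = ennreal (measure (state_dist S P \<iota> T \<sigma> t) (-{None}))"
    by (simp add: measure_pmf.emeasure_eq_measure)
  also have "measure (state_dist S P \<iota> T \<sigma> t) (-{None}) = 1 - pmf (state_dist S P \<iota> T \<sigma> t) None"
    using measure_pmf.prob_compl[of "{None}" "state_dist S P \<iota> T \<sigma> t"]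
    by (simp add: measure_pmf_single Compl_eq_Diff_UNIV)
  finally show ?thesis unfolding survive_state_dist by simp
qed

lemma exp_escape_pot_le_survive: "exp_escape_pot \<sigma> t \<le> ennreal (survive S P \<iota> T \<sigma> t)"
  unfolding exp_escape_pot_def nn_integral_alive[symmetric]
  by (intro nn_integral_mono) (auto simp: alive_pot_def escape_pot_le_1 split: option.splits split_indicator)

lemma exp_escape_pot_ge_point:
  "ennreal (pmf (state_dist S P \<iota> T \<sigma> t) (Some s) * escape_pot s) \<le> exp_escape_pot \<sigma> t"
proof -
  have "ennreal (pmf (state_dist S P \<iota> T \<sigma> t) (Some s) * escape_pot s)
      = alive_pot escape_pot (Some s) * emeasure (state_dist S P \<iota> T \<sigma> t) {Some s}"
    unfolding alive_pot_def using escape_pot_nonneg[of s]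
    by (simp add: emeasure_pmf_single ennreal_mult' mult.commute)
  also have "\<dots> = (\<integral>\<^sup>+y. alive_pot escape_pot y * indicator {Some s} y \<partial>state_dist S P \<iota> T \<sigma> t)"
    by (simp add: nn_integral_cmult_indicator[symmetric] mult.commute)
       (intro nn_integral_cong, simp split: split_indicator)
  also have "\<dots> \<le> exp_escape_pot \<sigma> t"
    unfolding exp_escape_pot_def by (intro nn_integral_mono) (simp split: split_indicator)
  finally show ?thesis .
qed

text \<open>An agent whose survival probability vanishes is never alive outside the almost-sure
  region: positive mass there would keep the nondecreasing expected escape potential, and hence
  the survival probability, bounded away from 0.\<close>

lemma alive_in_as_region:
  assumes v: "valid_strat S Act P \<sigma>" and lim: "(\<lambda>t. survive S P \<iota> T \<sigma> t) \<longlonglongrightarrow> 0"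
    and s: "Some s \<in> set_pmf (state_dist S P \<iota> T \<sigma> t)"
  shows "s \<in> as_region"
proof (rule ccontr)
  assume out: "s \<notin> as_region"
  obtain x where x: "x \<in> set_pmf (agent_dist S P \<iota> T \<sigma> t)" "Some s = map_option fst x"
    using s by (auto simp: state_dist_def)
  moreover obtain m where sm: "Some (s, m) \<in> set_pmf (agent_dist S P \<iota> T \<sigma> t)"
    using x by (cases x) auto
  moreover have "s \<in> S" using set_pmf_agent_dist[OF mdp v iota_S] sm by auto
  ultimately have "s \<in> S - T - as_region" using alive_not_target[OF iota_not_T sm] out by auto
  then have c: "0 < pmf (state_dist S P \<iota> T \<sigma> t) (Some s) * escape_pot s" (is "0 < ?c")
    using s escape_pot_pos by (simp add: pmf_positive)
  have "?c \<le> survive S P \<iota> T \<sigma> t'" if "t \<le> t'" for t'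
  proof -
    have "ennreal ?c \<le> ennreal (survive S P \<iota> T \<sigma> t')"
      using exp_escape_pot_ge_point exp_escape_pot_mono[OF v that] exp_escape_pot_le_survive
      by (rule order.trans[OF _ order.trans])
    then show ?thesis by (subst (asm) ennreal_le_iff) (auto intro: survive_nonneg)
  qed
  moreover obtain t0 where "\<And>t'. t' \<ge> t0 \<Longrightarrow> survive S P \<iota> T \<sigma> t' < ?c"
    using order_tendstoD(2)[OF lim c] unfolding eventually_sequentially by auto
  ultimately show False using le_add1[of t t0] le_add2[of t0 t] by fastforce
qed

abbreviation switch_strat :: "('s, 'a, 'm) strat \<Rightarrow> nat \<Rightarrow> ('s, 'a, nat) strat" where
  "switch_strat \<sigma> N \<equiv> counter_strat S P \<iota> T \<sigma> N attractor_act"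

lemma valid_switch_strat: "valid_strat S Act P \<sigma> \<Longrightarrow> valid_strat S Act P (switch_strat \<sigma> N)"
  by (rule valid_counter_strat[OF mdp _ iota_S iota_not_T attractor_act_enabled])

lemma agent_step_switch_strat_saturated:
  "agent_step S P T (switch_strat \<sigma> N) (Some (s, N))
     = map_pmf (map_option (\<lambda>s'. (s', N))) (move S P T s (attractor_act s))"
  by (simp add: agent_step_counter_strat act_counter_strat bind_return_pmf)

lemma set_pmf_agent_dist_switch_strat:
  assumes alive: "\<And>s. Some s \<in> set_pmf (state_dist S P \<iota> T \<sigma> N) \<Longrightarrow> s \<in> as_region"
    and t: "N \<le> t"
  shows "set_pmf (agent_dist S P \<iota> T (switch_strat \<sigma> N) t) \<subseteq> insert None (Some ` (as_region \<times> {N}))"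
  using t
proof (induction t rule: dec_induct)
  case base
  show ?case
  proof
    fix y assume "y \<in> set_pmf (agent_dist S P \<iota> T (switch_strat \<sigma> N) N)"
    then obtain x where "x \<in> set_pmf (state_dist S P \<iota> T \<sigma> N)" "y = map_option (\<lambda>s. (s, N)) x"
      by (auto simp: agent_dist_counter_strat)
    then show "y \<in> insert None (Some ` (as_region \<times> {N}))" using alive by (cases x) auto
  qed
next
  case (step t)
  show ?case
  proof
    fix y assume "y \<in> set_pmf (agent_dist S P \<iota> T (switch_strat \<sigma> N) (Suc t))"
    then obtain x where x: "x \<in> set_pmf (agent_dist S P \<iota> T (switch_strat \<sigma> N) t)"
      and y: "y \<in> set_pmf (agent_step S P T (switch_strat \<sigma> N) x)"
      unfolding agent_dist_Suc_step by auto
    show "y \<in> insert None (Some ` (as_region \<times> {N}))"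
    proof (cases x)
      case (Some p)
      then obtain s where xs: "x = Some (s, N)" and s: "s \<in> as_region" using step.IH x by auto
      then have sS: "s \<in> S" using as_region_subset by auto
      have safe: "safe_act as_region s (attractor_act s)" using attractor_act_as_region[OF s] by auto
      obtain s' where s': "s' \<in> set_pmf (trans_pmf S P s (attractor_act s))"
        and y': "y = map_option (\<lambda>s'. (s', N)) (if s' \<in> T then None else Some s')"
        using y unfolding xs agent_step_switch_strat_saturated move_def by auto
      have "s' \<in> S" "P s (attractor_act s) s' \<noteq> 0"
        using s' in_set_trans_pmf_iff[OF mdp sS attractor_act_enabled[OF sS]] by auto
      then have "s' \<in> as_region \<union> T" using safe unfolding safe_act_def by auto
      then show ?thesis using y' by auto
    qed (use y in simp)
  qed
qed

definition exp_hit_pot :: "('s, 'a, 'm) strat \<Rightarrow> nat \<Rightarrow> nat \<Rightarrow> ennreal" where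
  "exp_hit_pot \<sigma> N t = (\<integral>\<^sup>+x. alive_pot hit_pot (map_option fst x) \<partial>agent_dist S P \<iota> T (switch_strat \<sigma> N) t)"

lemma survive_nn_integral:
  "ennreal (survive S P \<iota> T \<sigma> t) = (\<integral>\<^sup>+x. indicator (-{None}) (map_option fst x) \<partial>agent_dist S P \<iota> T \<sigma> t)"
  unfolding nn_integral_alive[symmetric] state_dist_def by simp

lemma exp_hit_pot_step_le:
  assumes s: "s \<in> as_region"
  shows "(\<integral>\<^sup>+y. alive_pot hit_pot (map_option fst y) \<partial>agent_step S P T (switch_strat \<sigma> N) (Some (s, N))) + 1
    \<le> ennreal (hit_pot s)"
proof -
  have sS: "s \<in> S" using s as_region_subset by auto
  have aE: "attractor_act s \<in> enabled S Act P s" using attractor_act_enabled[OF sS] .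
  let ?E = "\<Sum>s'\<in>S. P s (attractor_act s) s' * (if s' \<in> T then 0 else hit_pot s')"
  have "(\<integral>\<^sup>+y. alive_pot hit_pot (map_option fst y) \<partial>agent_step S P T (switch_strat \<sigma> N) (Some (s, N)))
      = (\<integral>\<^sup>+y. alive_pot hit_pot y \<partial>move S P T s (attractor_act s))"
    unfolding agent_step_switch_strat_saturated by (simp add: option.map_comp comp_def option.map_ident)
  also have "\<dots> = ennreal ?E"
    by (rule nn_integral_move[OF sS aE hit_pot_nonneg])
  finally have "(\<integral>\<^sup>+y. alive_pot hit_pot (map_option fst y) \<partial>agent_step S P T (switch_strat \<sigma> N) (Some (s, N))) + 1
      = ennreal (?E + 1)"
    using P_nonneg[OF sS enabled_in_Act[OF aE]] hit_pot_nonneg by (simp add: ennreal_plus sum_nonneg)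
  also have "\<dots> \<le> ennreal (hit_pot s)" using hit_pot_drift[OF s] by (intro ennreal_leI) simp
  finally show ?thesis .
qed

lemma exp_hit_pot_drift:
  assumes alive: "\<And>s. Some s \<in> set_pmf (state_dist S P \<iota> T \<sigma> N) \<Longrightarrow> s \<in> as_region"
    and t: "N \<le> t"
  shows "exp_hit_pot \<sigma> N (Suc t) + ennreal (survive S P \<iota> T (switch_strat \<sigma> N) t) \<le> exp_hit_pot \<sigma> N t"
proof -
  let ?\<mu> = "agent_dist S P \<iota> T (switch_strat \<sigma> N) t"
  have "exp_hit_pot \<sigma> N (Suc t) + ennreal (survive S P \<iota> T (switch_strat \<sigma> N) t) =
    (\<integral>\<^sup>+x. (\<integral>\<^sup>+y. alive_pot hit_pot (map_option fst y) \<partial>agent_step S P T (switch_strat \<sigma> N) x)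
       + indicator (-{None}) (map_option fst x) \<partial>?\<mu>)"
    unfolding exp_hit_pot_def survive_nn_integral agent_dist_Suc_step
    by (simp add: nn_integral_add)
  also have "\<dots> \<le> (\<integral>\<^sup>+x. alive_pot hit_pot (map_option fst x) \<partial>?\<mu>)"
  proof (intro nn_integral_mono_AE, unfold AE_measure_pmf_iff, intro ballI)
    fix x assume "x \<in> set_pmf ?\<mu>"
    then have "x = None \<or> (\<exists>s\<in>as_region. x = Some (s, N))"
      using set_pmf_agent_dist_switch_strat[OF alive t] by auto
    then show "(\<integral>\<^sup>+y. alive_pot hit_pot (map_option fst y) \<partial>agent_step S P T (switch_strat \<sigma> N) x)
        + indicator (-{None}) (map_option fst x) \<le> alive_pot hit_pot (map_option fst x)"
      using exp_hit_pot_step_le by (auto simp: alive_pot_def)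
  qed
  finally show ?thesis unfolding exp_hit_pot_def .
qed

lemma exp_hit_pot_sum_survive:
  assumes "\<And>s. Some s \<in> set_pmf (state_dist S P \<iota> T \<sigma> N) \<Longrightarrow> s \<in> as_region"
  shows "exp_hit_pot \<sigma> N (N + M) + (\<Sum>t<M. ennreal (survive S P \<iota> T (switch_strat \<sigma> N) (N + t)))
    \<le> exp_hit_pot \<sigma> N N"
proof (induction M)
  case (Suc M)
  have "exp_hit_pot \<sigma> N (N + Suc M) + (\<Sum>t<Suc M. ennreal (survive S P \<iota> T (switch_strat \<sigma> N) (N + t)))
     = (exp_hit_pot \<sigma> N (Suc (N + M)) + ennreal (survive S P \<iota> T (switch_strat \<sigma> N) (N + M)))
       + (\<Sum>t<M. ennreal (survive S P \<iota> T (switch_strat \<sigma> N) (N + t)))"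
    by (simp add: add_ac)
  also have "\<dots> \<le> exp_hit_pot \<sigma> N (N + M) + (\<Sum>t<M. ennreal (survive S P \<iota> T (switch_strat \<sigma> N) (N + t)))"
    by (intro add_right_mono exp_hit_pot_drift[OF assms] le_add1)
  also have "\<dots> \<le> exp_hit_pot \<sigma> N N" by (rule Suc.IH)
  finally show ?case .
qed simp

lemma exp_hit_pot_start_le: "exp_hit_pot \<sigma> N N \<le> ennreal (hit_bound * survive S P \<iota> T \<sigma> N)"
proof -
  have "exp_hit_pot \<sigma> N N \<le> (\<integral>\<^sup>+x. ennreal hit_bound * indicator (-{None}) (map_option fst x)
      \<partial>agent_dist S P \<iota> T (switch_strat \<sigma> N) N)"
    unfolding exp_hit_pot_def
    by (intro nn_integral_mono) (auto simp: alive_pot_def hit_pot_le_hit_bound ennreal_leI split: option.splits)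
  also have "\<dots> = ennreal hit_bound * ennreal (survive S P \<iota> T (switch_strat \<sigma> N) N)"
    unfolding survive_nn_integral by (rule nn_integral_cmult) auto
  also have "\<dots> = ennreal (hit_bound * survive S P \<iota> T \<sigma> N)"
    by (simp add: survive_counter_strat ennreal_mult hit_bound_nonneg survive_nonneg)
  finally show ?thesis .
qed

theorem switch_strat_tail:
  assumes "\<And>s. Some s \<in> set_pmf (state_dist S P \<iota> T \<sigma> N) \<Longrightarrow> s \<in> as_region"
  shows "(\<Sum>t. ennreal (survive S P \<iota> T (switch_strat \<sigma> N) (t + N)))
    \<le> ennreal (hit_bound * survive S P \<iota> T \<sigma> N)"
  unfolding suminf_eq_SUP
proof (rule SUP_least)
  fix M
  have "(\<Sum>t<M. ennreal (survive S P \<iota> T (switch_strat \<sigma> N) (t + N)))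
      \<le> exp_hit_pot \<sigma> N (N + M) + (\<Sum>t<M. ennreal (survive S P \<iota> T (switch_strat \<sigma> N) (N + t)))"
    by (simp add: add.commute)
  also have "\<dots> \<le> exp_hit_pot \<sigma> N N" by (rule exp_hit_pot_sum_survive[OF assms])
  also have "\<dots> \<le> ennreal (hit_bound * survive S P \<iota> T \<sigma> N)" by (rule exp_hit_pot_start_le)
  finally show "(\<Sum>t<M. ennreal (survive S P \<iota> T (switch_strat \<sigma> N) (t + N)))
      \<le> ennreal (hit_bound * survive S P \<iota> T \<sigma> N)" .
qed

end

section \<open>Finite memory suffices for \<open>\<epsilon>\<close>-optimality\<close>

lemma prod_le_factor:
  fixes f :: "nat \<Rightarrow> real"
  assumes "\<And>i. i < k \<Longrightarrow> 0 \<le> f i \<and> f i \<le> 1" "j < k"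
  shows "(\<Prod>i<k. f i) \<le> f j"
proof -
  have "(\<Prod>i<k. f i) = f j * (\<Prod>i\<in>{..<k} - {j}. f i)"
    using assms(2) by (simp add: prod.remove)
  also have "\<dots> \<le> f j * 1"
    using assms by (intro mult_left_mono prod_le_1) auto
  finally show ?thesis by simp
qed

lemma decseq_prod_tendsto_0_factor:
  fixes f :: "nat \<Rightarrow> nat \<Rightarrow> real"
  assumes "(\<lambda>t. \<Prod>i<k. f i t) \<longlonglongrightarrow> 0" "\<And>i. decseq (f i)" "\<And>i t. 0 \<le> f i t"
  obtains j where "j < k" "f j \<longlonglongrightarrow> 0"
proof -
  have lim: "f i \<longlonglongrightarrow> (INF t. f i t)" for i
    using assms(2,3) by (intro LIMSEQ_decseq_INF) (auto intro: bdd_belowI[of _ 0])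
  then have "(\<lambda>t. \<Prod>i<k. f i t) \<longlonglongrightarrow> (\<Prod>i<k. INF t. f i t)"
    by (intro tendsto_prod)
  then have "(\<Prod>i<k. INF t. f i t) = 0" using assms(1) by (rule LIMSEQ_unique)
  then obtain j where "j < k" "(INF t. f j t) = 0" by (auto simp: prod_zero_iff)
  then show ?thesis using that lim[of j] by simp
qed

lemma mdp_agent_of_mssp:
  assumes "is_mssp S Act P k iota T" "i < k"
  shows "mdp_agent S Act P (T i) (iota i)"
  using assms unfolding is_mssp_def mdp_agent_def mdp_agent_axioms_def mdp_target_def by auto

lemma mdp_target_of_mssp: "is_mssp S Act P k iota T \<Longrightarrow> mdp_target S Act P"
  unfolding is_mssp_def by unfold_locales simp

lemma E_MHit_eq_suminf:
  "E_MHit S P k iota T \<pi> = (\<Sum>t. ennreal (\<Prod>i<k. survive S P (iota i) (T i) (\<pi> i) t))"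
  unfolding E_MHit_def prob_MHit_gt_def ..

lemma memoryless_attractor_profile:
  assumes "is_mssp S Act P k iota T"
  defines "\<pi> \<equiv> \<lambda>i. \<lparr>mem = {0::nat}, init = return_pmf 0,
    act = (\<lambda>s m. return_pmf (mdp_target.attractor_act S Act P (T i) s)), upd = (\<lambda>m s. return_pmf 0)\<rparr>"
  shows "valid_profile S Act P k \<pi>" "finite_memory k \<pi>"
proof -
  have "mdp_target.attractor_act S Act P (T i) s \<in> enabled S Act P s" if "s \<in> S" for i s
    using mdp_target.attractor_act_enabled[OF mdp_target_of_mssp[OF assms(1)] that] .
  then show "valid_profile S Act P k \<pi>" unfolding valid_profile_def valid_strat_def \<pi>_def by auto
  show "finite_memory k \<pi>" unfolding finite_memory_def \<pi>_def by simp
qed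

lemma E_MHit_switch_profile:
  fixes N :: nat
  assumes mssp: "is_mssp S Act P k iota T" and valid: "valid_profile S Act P k \<pi>"
    and j: "j < k" and lim: "(\<lambda>t. survive S P (iota j) (T j) (\<pi> j) t) \<longlonglongrightarrow> 0"
  defines "\<pi>N \<equiv> \<lambda>i. counter_strat S P (iota i) (T i) (\<pi> i) N (mdp_target.attractor_act S Act P (T i))"
  shows "E_MHit S P k iota T \<pi>N
    \<le> E_MHit S P k iota T \<pi> + ennreal (mdp_target.hit_bound S Act P (T j) * survive S P (iota j) (T j) (\<pi> j) N)"
proof -
  interpret mdp_agent S Act P "T j" "iota j" by (rule mdp_agent_of_mssp[OF mssp j])
  define sv where "sv i t = survive S P (iota i) (T i) (\<pi>N i) t" for i t
  have sv01: "0 \<le> sv i t \<and> sv i t \<le> 1" for i t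
    unfolding sv_def using survive_nonneg survive_le_1 by auto
  have early: "sv i t = survive S P (iota i) (T i) (\<pi> i) t" if "t \<le> N" for i t
    unfolding sv_def \<pi>N_def using that by (rule survive_counter_strat)
  have "(\<Sum>t<N. ennreal (\<Prod>i<k. sv i t)) \<le> E_MHit S P k iota T \<pi>"
    unfolding E_MHit_eq_suminf using early by (simp add: sum_le_suminf)
  moreover have "(\<Sum>t. ennreal (\<Prod>i<k. sv i (t + N))) \<le> ennreal (hit_bound * survive S P (iota j) (T j) (\<pi> j) N)"
  proof -
    have "(\<Sum>t. ennreal (\<Prod>i<k. sv i (t + N))) \<le> (\<Sum>t. ennreal (sv j (t + N)))"
      using sv01 j by (intro suminf_le ennreal_leI prod_le_factor) auto
    also have "\<dots> \<le> ennreal (hit_bound * survive S P (iota j) (T j) (\<pi> j) N)"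
      unfolding sv_def \<pi>N_def using alive_in_as_region[OF _ lim] valid j unfolding valid_profile_def
      by (intro switch_strat_tail) auto
    finally show ?thesis .
  qed
  moreover have "E_MHit S P k iota T \<pi>N = (\<Sum>t. ennreal (\<Prod>i<k. sv i (t + N))) + (\<Sum>t<N. ennreal (\<Prod>i<k. sv i t))"
    unfolding E_MHit_eq_suminf sv_def by (rule suminf_offset) (rule summableI)
  ultimately show ?thesis by (simp add: add.commute add_mono)
qed

lemma finite_E_MHit_agent_survive_tendsto_0:
  assumes "E_MHit S P k iota T \<pi> < top"
  obtains j where "j < k" "(\<lambda>t. survive S P (iota j) (T j) (\<pi> j) t) \<longlonglongrightarrow> 0"
proof -
  have "(\<lambda>t. \<Prod>i<k. survive S P (iota i) (T i) (\<pi> i) t) \<longlonglongrightarrow> 0"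
    using assms unfolding E_MHit_eq_suminf
    by (intro summable_LIMSEQ_zero summable_suminf_not_top) (auto simp: prod_nonneg survive_nonneg)
  then show ?thesis
    by (rule decseq_prod_tendsto_0_factor[where f = "\<lambda>i t. survive S P (iota i) (T i) (\<pi> i) t"])
       (auto intro: that decseq_SucI survive_Suc_le survive_nonneg)
qed

lemma finite_memory_approx:
  assumes mssp: "is_mssp S Act P k iota T" and valid: "valid_profile S Act P k \<pi>"
    and finite: "E_MHit S P k iota T \<pi> < top" and "0 < \<delta>"
  shows "\<exists>\<pi>N :: nat \<Rightarrow> ('s, 'a, nat) strat. valid_profile S Act P k \<pi>N \<and> finite_memory k \<pi>N
    \<and> E_MHit S P k iota T \<pi>N \<le> E_MHit S P k iota T \<pi> + ennreal \<delta>"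
proof -
  obtain j where j: "j < k" and lim: "(\<lambda>t. survive S P (iota j) (T j) (\<pi> j) t) \<longlonglongrightarrow> 0"
    using finite_E_MHit_agent_survive_tendsto_0[OF finite] .
  interpret mdp_agent S Act P "T j" "iota j" by (rule mdp_agent_of_mssp[OF mssp j])
  have "(\<lambda>t. hit_bound * survive S P (iota j) (T j) (\<pi> j) t) \<longlonglongrightarrow> hit_bound * 0"
    by (intro tendsto_mult lim tendsto_const)
  then have "eventually (\<lambda>t. hit_bound * survive S P (iota j) (T j) (\<pi> j) t < \<delta>) sequentially"
    using \<open>0 < \<delta>\<close> by (intro order_tendstoD) auto
  then obtain N where N: "hit_bound * survive S P (iota j) (T j) (\<pi> j) N < \<delta>"
    unfolding eventually_sequentially by auto
  define \<pi>N where "\<pi>N i = counter_strat S P (iota i) (T i) (\<pi> i) N (mdp_target.attractor_act S Act P (T i))" for i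
  have "valid_profile S Act P k \<pi>N"
    using valid mdp_agent.valid_switch_strat[OF mdp_agent_of_mssp[OF mssp]]
    unfolding valid_profile_def \<pi>N_def by blast
  moreover have "finite_memory k \<pi>N" unfolding finite_memory_def \<pi>N_def by (simp add: counter_strat_def)
  moreover have "E_MHit S P k iota T \<pi>N \<le> E_MHit S P k iota T \<pi> + ennreal \<delta>"
    unfolding \<pi>N_def using E_MHit_switch_profile[OF mssp valid j lim, where N = N] N
    by (meson add_left_mono ennreal_leI less_imp_le order.trans)
  ultimately show ?thesis by blast
qed

theorem eps_optimal_finite_memory:
  assumes mssp: "is_mssp S Act P k iota T" and "0 < \<epsilon>"
  shows "\<exists>\<pi> :: nat \<Rightarrow> ('s, 'a, nat) strat. valid_profile S Act P k \<pi> \<and> finite_memory k \<pi>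
    \<and> E_MHit S P k iota T \<pi> \<le> (INF \<pi>' \<in> {\<pi>' :: nat \<Rightarrow> ('s, 'a, 'm) strat. valid_profile S Act P k \<pi>'}.
                                 E_MHit S P k iota T \<pi>') + ennreal \<epsilon>"
    (is "\<exists>\<pi>. _ \<and> _ \<and> _ \<le> ?inf + _")
proof (cases "?inf = top")
  case True
  then show ?thesis using memoryless_attractor_profile[OF mssp] by auto
next
  case False
  then have "?inf < ?inf + ennreal (\<epsilon> / 2)"
    using \<open>0 < \<epsilon>\<close> by (simp add: top.not_eq_extremum ennreal_add_left_cancel_less[of _ 0, simplified])
  then obtain \<pi> :: "nat \<Rightarrow> ('s, 'a, 'm) strat" where valid: "valid_profile S Act P k \<pi>"
    and E: "E_MHit S P k iota T \<pi> < ?inf + ennreal (\<epsilon> / 2)"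
    unfolding INF_less_iff by auto
  have "E_MHit S P k iota T \<pi> < top"
    using E False by (metis ennreal_add_less_top ennreal_less_top less_trans top.not_eq_extremum)
  with finite_memory_approx[OF mssp valid] obtain \<pi>N :: "nat \<Rightarrow> ('s, 'a, nat) strat"
    where "valid_profile S Act P k \<pi>N" "finite_memory k \<pi>N"
      and approx: "E_MHit S P k iota T \<pi>N \<le> E_MHit S P k iota T \<pi> + ennreal (\<epsilon> / 2)"
    using \<open>0 < \<epsilon>\<close> by (meson half_gt_zero)
  moreover have "E_MHit S P k iota T \<pi>N \<le> ?inf + ennreal \<epsilon>"
  proof -
    note approx
    also have "E_MHit S P k iota T \<pi> + ennreal (\<epsilon> / 2) \<le> ?inf + ennreal (\<epsilon> / 2) + ennreal (\<epsilon> / 2)"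
      using E by (intro add_right_mono) simp
    also have "\<dots> = ?inf + ennreal \<epsilon>"
      using \<open>0 < \<epsilon>\<close> by (simp add: add.assoc ennreal_plus[symmetric] del: ennreal_plus)
    finally show ?thesis .
  qed
  ultimately show ?thesis by blast
qed

theorem mainTheorem4:
  shows "(\<forall>n::nat. n \<ge> 1 \<longrightarrow>
            (\<exists>(S :: nat set) (Act :: nat set) P iota T (\<pi> :: nat \<Rightarrow> (nat, nat, nat) strat).
               is_mssp S Act P 2 iota T
             \<and> valid_profile S Act P 2 \<pi> \<and> mem_bounded (n + 1) 2 \<pi>
             \<and> E_MHit S P 2 iota T \<pi>
                 < (INF \<pi>' \<in> {\<pi>' :: nat \<Rightarrow> (nat, nat, nat) strat.
                                 valid_profile S Act P 2 \<pi>' \<and> mem_bounded n 2 \<pi>'}.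
                      E_MHit S P 2 iota T \<pi>')))
       \<and> (\<forall>(S :: 's set) (Act :: 'a set) P k iota T (\<epsilon> :: real).
            is_mssp S Act P k iota T \<and> \<epsilon> > 0 \<longrightarrow>
            (\<exists>\<pi> :: nat \<Rightarrow> ('s, 'a, nat) strat.
               valid_profile S Act P k \<pi> \<and> finite_memory k \<pi>
             \<and> E_MHit S P k iota T \<pi>
                 \<le> (INF \<pi>' \<in> {\<pi>' :: nat \<Rightarrow> ('s, 'a, 'm) strat. valid_profile S Act P k \<pi>'}.
                      E_MHit S P k iota T \<pi>') + ennreal \<epsilon>))"
  by (intro conjI allI impI) (blast intro: memory_hierarchy eps_optimal_finite_memory)+

end
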